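(* Let $\epsilon:B\to A$ be a local augmentation, with section $j:A\to B$ ($\epsilon j=\mathrm{id}_A$). Let $C$ be the subgroup of the group of units of $B$ generated by $$\{(1+ab)(1+ba)^{-1}\mid a,b\in B,\ \epsilon(ab)=\epsilon(ba)=0\}.$$ Then $C$ is a normal subgroup of $\epsilon^{-1}(1)$, and there is a canonical isomorphism $$K_1(B)\cong K_1(A)\oplus \frac{\epsilon^{-1}(1)}{C},$$ given on $K_1(A)$ by the map induced by $j$ and on $\epsilon^{-1}(1)/C$ by sending the class of a unit $u\in\epsilon^{-1}(1)$ to the class $[u]\in K_1(B)$ of the $1\times1$ invertible matrix $(u)$.
   Context: Rings are associative with $1$. A ring homomorphism $f:B\to A$ is local if every square matrix $\alpha$ with entries in $B$ such that $f(\alpha)$ is invertible is itself invertible. An augmentation is a pair of ring homomorphisms $\epsilon:B\to A$, $j:A\to B$ with $\epsilon j=\mathrm{id}_A$; a local augmentation is an augmentation for which $\epsilon$ is local. Note every element of $\epsilon^{-1}(1)$ is a unit of $B$. $K_1(R)$ denotes the abelianization of $\mathrm{GL}(R)=\varinjlim \mathrm{GL}_n(R)$. *)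

theory Defs
  imports Main "HOL-Algebra.Solvable_Groups"
begin

definition ring_hom_cls :: "('b::ring_1 \<Rightarrow> 'a::ring_1) \<Rightarrow> bool" where
  "ring_hom_cls f \<longleftrightarrow> f 1 = 1 \<and> (\<forall>x y. f (x + y) = f x + f y) \<and> (\<forall>x y. f (x * y) = f x * f y)"

definition sq_invertible :: "nat \<Rightarrow> (nat \<Rightarrow> nat \<Rightarrow> 'a::ring_1) \<Rightarrow> bool" where
  "sq_invertible n \<alpha> \<longleftrightarrow> (\<exists>\<beta>. \<forall>i<n. \<forall>k<n.
      (\<Sum>l<n. \<alpha> i l * \<beta> l k) = (if i = k then 1 else 0) \<and>
      (\<Sum>l<n. \<beta> i l * \<alpha> l k) = (if i = k then 1 else 0))"

definition local_hom :: "('b::ring_1 \<Rightarrow> 'a::ring_1) \<Rightarrow> bool" where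
  "local_hom f \<longleftrightarrow> (\<forall>n \<alpha>. sq_invertible n (\<lambda>i k. f (\<alpha> i k)) \<longrightarrow> sq_invertible n \<alpha>)"

definition local_augmentation :: "('b::ring_1 \<Rightarrow> 'a::ring_1) \<Rightarrow> ('a \<Rightarrow> 'b) \<Rightarrow> bool" where
  "local_augmentation \<epsilon> j \<longleftrightarrow> ring_hom_cls \<epsilon> \<and> ring_hom_cls j \<and> (\<forall>x. \<epsilon> (j x) = x) \<and> local_hom \<epsilon>"

(* GL(R) = lim GL_n(R): N x N matrices agreeing with the identity outside some n x n block *)
definition idm :: "nat \<Rightarrow> nat \<Rightarrow> 'a::ring_1" where
  "idm i k = (if i = k then 1 else 0)"

definition fin_mat :: "(nat \<Rightarrow> nat \<Rightarrow> 'a::ring_1) \<Rightarrow> bool" where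
  "fin_mat M \<longleftrightarrow> (\<exists>n. \<forall>i k. (n \<le> i \<or> n \<le> k) \<longrightarrow> M i k = idm i k)"

(* product; for fin_mat matrices each row has finite support *)
definition mmul :: "(nat \<Rightarrow> nat \<Rightarrow> 'a::ring_1) \<Rightarrow> (nat \<Rightarrow> nat \<Rightarrow> 'a) \<Rightarrow> nat \<Rightarrow> nat \<Rightarrow> 'a" where
  "mmul M N i k = (\<Sum>l\<in>{l. M i l \<noteq> 0}. M i l * N l k)"

definition GL_set :: "(nat \<Rightarrow> nat \<Rightarrow> 'a::ring_1) set" where
  "GL_set = {M. fin_mat M \<and> (\<exists>N. fin_mat N \<and> mmul M N = idm \<and> mmul N M = idm)}"

definition GL_group :: "(nat \<Rightarrow> nat \<Rightarrow> 'a::ring_1) monoid" where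
  "GL_group = \<lparr>carrier = GL_set, mult = mmul, one = idm\<rparr>"

definition K1 :: "(nat \<Rightarrow> nat \<Rightarrow> 'a::ring_1) set monoid" where
  "K1 = GL_group Mod (derived GL_group (carrier GL_group))"

definition K1class :: "(nat \<Rightarrow> nat \<Rightarrow> 'a::ring_1) \<Rightarrow> (nat \<Rightarrow> nat \<Rightarrow> 'a) set" where
  "K1class M = derived GL_group (carrier GL_group) #>\<^bsub>GL_group\<^esub> M"

definition K1map :: "('a::ring_1 \<Rightarrow> 'b::ring_1) \<Rightarrow> (nat \<Rightarrow> nat \<Rightarrow> 'a) set \<Rightarrow> (nat \<Rightarrow> nat \<Rightarrow> 'b) set" where
  "K1map f X = the_elem ((\<lambda>M. K1class (\<lambda>i k. f (M i k))) ` X)"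

definition unit_mat :: "'a::ring_1 \<Rightarrow> nat \<Rightarrow> nat \<Rightarrow> 'a" where
  "unit_mat u i k = (if i = 0 \<and> k = 0 then u else idm i k)"

definition K1unit :: "'a::ring_1 set \<Rightarrow> (nat \<Rightarrow> nat \<Rightarrow> 'a) set" where
  "K1unit Y = the_elem ((\<lambda>u. K1class (unit_mat u)) ` Y)"

definition units_grp :: "'a::ring_1 monoid" where
  "units_grp = \<lparr>carrier = {u. \<exists>v. u * v = 1 \<and> v * u = 1}, mult = (*), one = 1\<rparr>"

end

(*
  Every M in GL(B) factors as M = N * j(eps(M)) with N congruent to the identity modulo eps.  Since
  eps is local, Gaussian elimination on N never meets a non-unit pivot and reduces N, by elementary
  operations, to the 1 x 1 matrix of the product of its pivots, a unit in eps^-1(1).  Modulo C this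
  pivot product is multiplicative and invariant under conjugation by GL(B); the inputs are that C
  contains all commutators of eps^-1(1) and identifies 1 + xy with 1 + yx whenever eps(xy) = eps(yx) = 0.
  Hence M |-> [pivot product of N] is a homomorphism delta : GL(B) -> eps^-1(1)/C which kills
  commutators and j(GL(A)) and sends (u) to the class of u.  Conversely C dies in K_1(B), because
  [1 + ab] = [1 + ba] there.  So (x, y) |-> j_*(x) [y] is onto K_1(B) by the factorization, and it is
  injective because eps_* and delta recover both components.
*)
theory Submission
  imports Defs
begin

type_synonym 'a mat = "nat \<Rightarrow> nat \<Rightarrow> 'a"
type_synonym 'a vec = "nat \<Rightarrow> 'a"

section \<open>Units and the group \<open>GL\<close>\<close>

lemma (in group) the_elem_hom_image_rcos:
  assumes H: "subgroup H G" and x: "x \<in> carrier G" and h: "h \<in> hom G K" "group K"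
    and triv: "\<And>c. c \<in> H \<Longrightarrow> h c = \<one>\<^bsub>K\<^esub>"
  shows "the_elem (h ` (H #> x)) = h x"
proof -
  have "h ` (H #> x) = {h x}"
  proof
    show "h ` (H #> x) \<subseteq> {h x}"
    proof
      fix y assume "y \<in> h ` (H #> x)"
      then obtain c where c: "c \<in> H" "y = h (c \<otimes> x)" unfolding r_coset_def by auto
      then have "y = h c \<otimes>\<^bsub>K\<^esub> h x" using H x h(1) by (simp add: hom_mult subgroup.mem_carrier)
      then show "y \<in> {h x}" using c triv x h by (simp add: hom_in_carrier group.is_monoid monoid.l_one)
    qed
    show "{h x} \<subseteq> h ` (H #> x)" using rcos_self[OF x H] by auto
  qed
  then show ?thesis by simp
qed

definition ring_unit :: "'a::ring_1 \<Rightarrow> bool" where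
  "ring_unit x \<longleftrightarrow> (\<exists>y. x * y = 1 \<and> y * x = 1)"

definition ring_inv :: "'a::ring_1 \<Rightarrow> 'a" where
  "ring_inv x = (SOME y. x * y = 1 \<and> y * x = 1)"  \<comment> \<open>arbitrary if \<open>x\<close> is not a unit\<close>

lemma ring_inv_r: "ring_unit x \<Longrightarrow> x * ring_inv x = 1"
  unfolding ring_unit_def ring_inv_def by (rule someI2_ex) auto

lemma ring_inv_l: "ring_unit x \<Longrightarrow> ring_inv x * x = 1"
  unfolding ring_unit_def ring_inv_def by (rule someI2_ex) auto

lemma ring_inv_unique: "x * y = 1 \<Longrightarrow> y * x = 1 \<Longrightarrow> ring_inv x = y"
proof -
  assume a: "x * y = 1" "y * x = 1"
  then have u: "ring_unit x" by (auto simp: ring_unit_def)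
  have "ring_inv x = ring_inv x * (x * y)" using a by simp
  also have "\<dots> = y" using ring_inv_l[OF u] by (simp flip: mult.assoc)
  finally show ?thesis .
qed

lemma ring_unit_mult: "ring_unit x \<Longrightarrow> ring_unit y \<Longrightarrow> ring_unit (x * y)"
  unfolding ring_unit_def
proof (elim exE conjE)
  fix a b assume "x * a = 1" "a * x = 1" "y * b = 1" "b * y = 1"
  then have "(x * y) * (b * a) = 1" "(b * a) * (x * y) = 1"
    by (simp_all add: mult.assoc) (simp_all flip: mult.assoc)
  then show "\<exists>z. x * y * z = 1 \<and> z * (x * y) = 1" by blast
qed

lemma ring_unit_ring_inv: "ring_unit x \<Longrightarrow> ring_unit (ring_inv x)"
  using ring_inv_l ring_inv_r ring_unit_def by blast

lemma ring_unit_one: "ring_unit 1" by (auto simp: ring_unit_def)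

lemma ring_inv_mult: "ring_unit x \<Longrightarrow> ring_unit y \<Longrightarrow> ring_inv (x * y) = ring_inv y * ring_inv x"
proof (rule ring_inv_unique)
  assume u: "ring_unit x" "ring_unit y"
  show "x * y * (ring_inv y * ring_inv x) = 1"
    using ring_inv_r[OF u(1)] ring_inv_r[OF u(2)] by (simp add: mult.assoc) (simp flip: mult.assoc)
  show "ring_inv y * ring_inv x * (x * y) = 1"
    using ring_inv_l[OF u(1)] ring_inv_l[OF u(2)] by (simp add: mult.assoc) (simp flip: mult.assoc)
qed

lemma ring_unit_one_plus_swap:
  assumes u: "ring_unit (1 + b * a)"
  shows "ring_unit (1 + a * b)" and "ring_inv (1 + a * b) = 1 - a * ring_inv (1 + b * a) * b"
proof -
  let ?v = "ring_inv (1 + b * a)"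
  have "(1 + a * b) * (1 - a * ?v * b) = 1 + a * b - a * ((1 + b * a) * ?v) * b"
    by (simp add: algebra_simps)
  also have "\<dots> = 1" using ring_inv_r[OF u] by simp
  finally have r: "(1 + a * b) * (1 - a * ?v * b) = 1" .
  have "(1 - a * ?v * b) * (1 + a * b) = 1 + a * b - a * (?v * (1 + b * a)) * b"
    by (simp add: algebra_simps)
  also have "\<dots> = 1" using ring_inv_l[OF u] by simp
  finally have l: "(1 - a * ?v * b) * (1 + a * b) = 1" .
  from r l show "ring_unit (1 + a * b)" by (auto simp: ring_unit_def)
  from r l show "ring_inv (1 + a * b) = 1 - a * ?v * b" by (rule ring_inv_unique)
qed

lemma ring_inv_push_through:
  assumes "ring_unit (1 + p * q)"
  shows "(1 + q * p) * (c - q * ring_inv (1 + p * q) * p * c) = c"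
proof -
  have "(1 + q * p) * (c - q * ring_inv (1 + p * q) * p * c)
      = c + q * p * c - q * ((1 + p * q) * ring_inv (1 + p * q)) * p * c"
    by (simp add: algebra_simps)
  also have "\<dots> = c" using ring_inv_r[OF assms] by simp
  finally show ?thesis .
qed

lemma units_grp_carrier: "carrier (units_grp :: 'a::ring_1 monoid) = {u. ring_unit u}"
  by (simp add: units_grp_def ring_unit_def)

lemma units_grp_mult: "x \<otimes>\<^bsub>(units_grp :: 'a::ring_1 monoid)\<^esub> y = x * y"
  by (simp add: units_grp_def)

lemma units_grp_one: "\<one>\<^bsub>(units_grp :: 'a::ring_1 monoid)\<^esub> = 1"
  by (simp add: units_grp_def)

lemma units_grp_group: "group (units_grp :: 'a::ring_1 monoid)"
proof (rule groupI)
  fix x y :: 'a assume "x \<in> carrier units_grp" "y \<in> carrier units_grp"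
  then show "x \<otimes>\<^bsub>units_grp\<^esub> y \<in> carrier units_grp"
    by (simp add: units_grp_carrier units_grp_mult ring_unit_mult)
next
  show "\<one>\<^bsub>units_grp\<^esub> \<in> carrier (units_grp :: 'a monoid)"
    by (simp add: units_grp_carrier units_grp_one ring_unit_one)
next
  fix x y z :: 'a
  show "x \<otimes>\<^bsub>units_grp\<^esub> y \<otimes>\<^bsub>units_grp\<^esub> z = x \<otimes>\<^bsub>units_grp\<^esub> (y \<otimes>\<^bsub>units_grp\<^esub> z)"
    by (simp add: units_grp_mult mult.assoc)
next
  fix x :: 'a show "\<one>\<^bsub>units_grp\<^esub> \<otimes>\<^bsub>units_grp\<^esub> x = x" by (simp add: units_grp_mult units_grp_one)
next
  fix x :: 'a assume "x \<in> carrier units_grp"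
  then show "\<exists>y\<in>carrier units_grp. y \<otimes>\<^bsub>units_grp\<^esub> x = \<one>\<^bsub>units_grp\<^esub>"
    by (auto simp: units_grp_carrier units_grp_mult units_grp_one intro!: bexI[of _ "ring_inv x"]
        ring_inv_l ring_unit_ring_inv)
qed

interpretation UGg: group "units_grp :: 'a::ring_1 monoid" by (rule units_grp_group)

lemma units_grp_inv: "ring_unit u \<Longrightarrow> inv\<^bsub>(units_grp :: 'a::ring_1 monoid)\<^esub> u = ring_inv u"
  by (rule UGg.inv_equality) (simp_all add: units_grp_mult units_grp_one units_grp_carrier ring_inv_l ring_unit_ring_inv)

definition in_block :: "nat \<Rightarrow> 'a::ring_1 mat \<Rightarrow> bool" where
  "in_block n M \<longleftrightarrow> (\<forall>i k. (n \<le> i \<or> n \<le> k) \<longrightarrow> M i k = idm i k)"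

definition blk_mult :: "nat \<Rightarrow> 'a::ring_1 mat \<Rightarrow> 'a mat \<Rightarrow> 'a mat" where
  "blk_mult n X Y i k = (\<Sum>l<n. X i l * Y l k)"

lemma fin_mat_in_block: "fin_mat M \<longleftrightarrow> (\<exists>n. in_block n M)"
  by (simp add: fin_mat_def in_block_def)

lemma in_block_mono: "in_block n M \<Longrightarrow> n \<le> m \<Longrightarrow> in_block m M"
  unfolding in_block_def by (meson le_trans)

lemma in_block_out: "in_block n M \<Longrightarrow> n \<le> i \<or> n \<le> k \<Longrightarrow> M i k = idm i k"
  unfolding in_block_def by blast

lemma in_block_idm: "in_block n idm" by (simp add: in_block_def)

lemma mmul_in_block:
  assumes "in_block n M"
  shows "mmul M N i k = (if i < n then blk_mult n M N i k else N i k)"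
proof (cases "i < n")
  case True
  have "mmul M N i k = (\<Sum>l\<in>{l. M i l \<noteq> 0}. M i l * N l k)" by (simp add: mmul_def)
  also have "\<dots> = (\<Sum>l<n. M i l * N l k)"
  proof (rule sum.mono_neutral_left)
    show "{l. M i l \<noteq> 0} \<subseteq> {..<n}"
    proof
      fix l assume "l \<in> {l. M i l \<noteq> 0}"
      then have "M i l \<noteq> 0" by simp
      show "l \<in> {..<n}"
      proof (rule ccontr)
        assume "l \<notin> {..<n}"
        then have "M i l = idm i l" using in_block_out[OF assms] by simp
        with True \<open>l \<notin> _\<close> \<open>M i l \<noteq> 0\<close> show False by (simp add: idm_def split: if_splits)
      qed
    qed
  qed auto
  finally show ?thesis using True by (simp add: blk_mult_def)
next
  case False
  then have "{l. M i l \<noteq> 0} = {i}" using in_block_out[OF assms, of i] by (auto simp: idm_def)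
  moreover have "M i i = 1" using in_block_out[OF assms, of i i] False by (simp add: idm_def)
  ultimately show ?thesis using False by (simp add: mmul_def)
qed

lemma mmul_eq_blk_mult: "in_block n M \<Longrightarrow> i < n \<Longrightarrow> mmul M N i k = blk_mult n M N i k"
  by (simp add: mmul_in_block)

lemma blk_mult_idm_out: assumes "in_block n N" "i < n" "n \<le> k" shows "blk_mult n M N i k = 0"
  unfolding blk_mult_def using assms by (auto intro!: sum.neutral simp: in_block_out idm_def)

lemma in_block_mmul: assumes "in_block n M" "in_block n N" shows "in_block n (mmul M N)"
  unfolding in_block_def
proof (intro allI impI)
  fix i k assume h: "n \<le> i \<or> n \<le> k"
  show "mmul M N i k = idm i k"
  proof (cases "i < n")
    case True
    then have "n \<le> k" using h by simp
    then show ?thesis using True blk_mult_idm_out[OF assms(2) True] by (simp add: mmul_in_block[OF assms(1)] idm_def)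
  next
    case False
    then show ?thesis using assms(2) by (simp add: mmul_in_block[OF assms(1)] in_block_out)
  qed
qed

lemma in_block_eqI: assumes "in_block n X" "in_block n Y" "\<And>i k. i < n \<Longrightarrow> k < n \<Longrightarrow> X i k = Y i k"
  shows "X = Y"
proof (intro ext)
  fix i k show "X i k = Y i k"
    using assms by (cases "i < n \<and> k < n") (auto simp: in_block_out not_less)
qed

lemma blk_mult_assoc: "blk_mult n (blk_mult n X Y) Z = blk_mult n X (blk_mult n Y Z)"
proof (intro ext)
  fix i k
  have "blk_mult n (blk_mult n X Y) Z i k = (\<Sum>l<n. (\<Sum>l'<n. X i l' * Y l' l) * Z l k)" by (simp add: blk_mult_def)
  also have "\<dots> = (\<Sum>l<n. \<Sum>l'<n. X i l' * (Y l' l * Z l k))" by (simp add: sum_distrib_right mult.assoc)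
  also have "\<dots> = (\<Sum>l'<n. \<Sum>l<n. X i l' * (Y l' l * Z l k))" by (rule sum.swap)
  also have "\<dots> = blk_mult n X (blk_mult n Y Z) i k" by (simp add: blk_mult_def sum_distrib_left)
  finally show "blk_mult n (blk_mult n X Y) Z i k = blk_mult n X (blk_mult n Y Z) i k" .
qed

lemma blk_mult_cong: assumes "\<And>i k. i < n \<Longrightarrow> k < n \<Longrightarrow> X i k = X' i k"
  "\<And>i k. i < n \<Longrightarrow> k < n \<Longrightarrow> Y i k = Y' i k" "i < n" "k < n"
  shows "blk_mult n X Y i k = blk_mult n X' Y' i k"
  unfolding blk_mult_def using assms by (intro sum.cong) auto

lemma mmul_assoc: assumes "in_block n M" "in_block n N" "in_block n P"
  shows "mmul (mmul M N) P = mmul M (mmul N P)"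
proof (rule in_block_eqI[of n])
  show "in_block n (mmul (mmul M N) P)" "in_block n (mmul M (mmul N P))"
    using assms by (auto intro!: in_block_mmul)
  fix i k assume ik: "i < n" "k < n"
  have "mmul (mmul M N) P i k = blk_mult n (mmul M N) P i k"
    using ik by (simp add: mmul_in_block[OF in_block_mmul[OF assms(1,2)]])
  also have "\<dots> = blk_mult n (blk_mult n M N) P i k"
    using ik by (intro blk_mult_cong) (auto simp: mmul_in_block[OF assms(1)])
  also have "\<dots> = blk_mult n M (blk_mult n N P) i k" by (simp add: blk_mult_assoc)
  also have "\<dots> = blk_mult n M (mmul N P) i k"
    using ik by (intro blk_mult_cong) (auto simp: mmul_in_block[OF assms(2)])
  also have "\<dots> = mmul M (mmul N P) i k"
    using ik by (simp add: mmul_in_block[OF assms(1)])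
  finally show "mmul (mmul M N) P i k = mmul M (mmul N P) i k" .
qed

lemma sum_idm_left: "i < n \<Longrightarrow> (\<Sum>l<n. idm i l * f l) = f i"
  by (simp add: idm_def if_distrib[where f="\<lambda>x. x * _"] sum.delta cong: if_cong)

lemma sum_idm_right: "k < n \<Longrightarrow> (\<Sum>l<n. f l * idm l k) = f k"
  by (simp add: idm_def if_distrib[where f="\<lambda>x. _ * x"] sum.delta' cong: if_cong)

lemma mmul_idm_left: "mmul idm M = M"
  by (intro ext) (simp add: mmul_in_block[OF in_block_idm[of 0]])

lemma common_block:
  assumes "fin_mat M" "fin_mat N"
  obtains n where "in_block n M" "in_block n N"
proof -
  obtain a c where "in_block a M" "in_block c N" using assms unfolding fin_mat_in_block by blast
  then have "in_block (max a c) M" "in_block (max a c) N" by (auto intro: in_block_mono)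
  then show ?thesis using that by blast
qed

lemma fin_mat_mmul: "fin_mat M \<Longrightarrow> fin_mat N \<Longrightarrow> fin_mat (mmul M N)"
  by (metis common_block fin_mat_in_block in_block_mmul)

lemma mmul_assoc_fin:
  assumes "fin_mat M" "fin_mat N" "fin_mat P"
  shows "mmul (mmul M N) P = mmul M (mmul N P)"
proof -
  obtain a where "in_block a M" "in_block a N" using assms(1,2) by (rule common_block)
  moreover obtain c where "in_block c N" "in_block c P" using assms(2,3) by (rule common_block)
  ultimately have "in_block (max a c) M" "in_block (max a c) N" "in_block (max a c) P"
    by (auto intro: in_block_mono)
  then show ?thesis by (rule mmul_assoc)
qed

lemma fin_mat_idm: "fin_mat idm" using in_block_idm fin_mat_in_block by blast

lemma GL_mult: "x \<otimes>\<^bsub>GL_group\<^esub> y = mmul x y" by (simp add: GL_group_def)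
lemma GL_one: "\<one>\<^bsub>GL_group\<^esub> = idm" by (simp add: GL_group_def)

lemma GL_memI:
  assumes "fin_mat M" "fin_mat N" "mmul M N = idm" "mmul N M = idm"
  shows "M \<in> carrier GL_group"
  using assms by (auto simp: GL_group_def GL_set_def)

lemma GL_memE:
  assumes "M \<in> carrier GL_group"
  obtains N where "fin_mat M" "fin_mat N" "mmul M N = idm" "mmul N M = idm"
  using assms by (auto simp: GL_group_def GL_set_def)

lemma GL_group_is_group: "group (GL_group :: 'a::ring_1 mat monoid)"
proof (rule groupI)
  fix x y :: "'a mat" assume "x \<in> carrier GL_group" "y \<in> carrier GL_group"
  then obtain x' y' where x': "fin_mat x" "fin_mat x'" "mmul x x' = idm" "mmul x' x = idm"
    and y': "fin_mat y" "fin_mat y'" "mmul y y' = idm" "mmul y' y = idm"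
    by (metis GL_memE)
  have "mmul (mmul x y) (mmul y' x') = idm"
    using x' y' by (simp add: mmul_assoc_fin fin_mat_mmul flip: mmul_assoc_fin[of y y' x']) (simp add: mmul_idm_left)
  moreover have "mmul (mmul y' x') (mmul x y) = idm"
    using x' y' by (simp add: mmul_assoc_fin fin_mat_mmul flip: mmul_assoc_fin[of x' x y]) (simp add: mmul_idm_left)
  ultimately show "x \<otimes>\<^bsub>GL_group\<^esub> y \<in> carrier GL_group"
    using x' y' by (auto simp: GL_mult fin_mat_mmul intro!: GL_memI[of _ "mmul y' x'"])
next
  show "\<one>\<^bsub>GL_group\<^esub> \<in> carrier GL_group"
    by (auto simp: GL_one fin_mat_idm mmul_idm_left intro!: GL_memI)
next
  fix x y z :: "'a mat"
  assume "x \<in> carrier GL_group" "y \<in> carrier GL_group" "z \<in> carrier GL_group"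
  then show "x \<otimes>\<^bsub>GL_group\<^esub> y \<otimes>\<^bsub>GL_group\<^esub> z = x \<otimes>\<^bsub>GL_group\<^esub> (y \<otimes>\<^bsub>GL_group\<^esub> z)"
    by (simp add: GL_group_def GL_set_def mmul_assoc_fin)
next
  fix x :: "'a mat"
  show "\<one>\<^bsub>GL_group\<^esub> \<otimes>\<^bsub>GL_group\<^esub> x = x" by (simp add: GL_group_def mmul_idm_left)
next
  fix x :: "'a mat" assume "x \<in> carrier GL_group"
  then obtain x' where "fin_mat x" "fin_mat x'" "mmul x x' = idm" "mmul x' x = idm" by (rule GL_memE)
  then show "\<exists>y\<in>carrier GL_group. y \<otimes>\<^bsub>GL_group\<^esub> x = \<one>\<^bsub>GL_group\<^esub>"
    by (auto simp: GL_mult GL_one intro!: bexI[of _ x'] GL_memI)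
qed

interpretation GLG: group "GL_group :: 'a::ring_1 mat monoid"
  by (rule GL_group_is_group)

definition GL_inv :: "'a::ring_1 mat \<Rightarrow> 'a mat" where
  "GL_inv M = inv\<^bsub>GL_group\<^esub> M"

definition conj_GL :: "'a::ring_1 mat \<Rightarrow> 'a mat \<Rightarrow> 'a mat" where
  "conj_GL Z A = mmul Z (mmul A (GL_inv Z))"

lemma GL_fin_mat: "M \<in> carrier GL_group \<Longrightarrow> fin_mat M"
  by (simp add: GL_group_def GL_set_def)

lemma GL_in_block: "M \<in> carrier GL_group \<Longrightarrow> \<exists>n. in_block n M"
  using GL_fin_mat fin_mat_in_block by blast

lemma GL_inv_eq: "M \<in> carrier GL_group \<Longrightarrow> N \<in> carrier GL_group \<Longrightarrow> mmul N M = idm \<Longrightarrow> GL_inv M = N"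
  unfolding GL_inv_def by (rule GLG.inv_equality) (auto simp: GL_group_def)

lemma GL_mmul_closed: "x \<in> carrier GL_group \<Longrightarrow> y \<in> carrier GL_group \<Longrightarrow> mmul x y \<in> carrier GL_group"
  using GLG.m_closed by (simp add: GL_mult)

lemma GL_assoc: "x \<in> carrier GL_group \<Longrightarrow> y \<in> carrier GL_group \<Longrightarrow> z \<in> carrier GL_group \<Longrightarrow>
  mmul (mmul x y) z = mmul x (mmul y z)"
  using GLG.m_assoc by (simp add: GL_mult)

lemma GL_inv_closed: "x \<in> carrier GL_group \<Longrightarrow> GL_inv x \<in> carrier GL_group"
  unfolding GL_inv_def by (rule GLG.inv_closed)

lemma GL_inv_r: "x \<in> carrier GL_group \<Longrightarrow> mmul x (GL_inv x) = idm"
  unfolding GL_inv_def using GLG.r_inv by (simp add: GL_mult GL_one)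

lemma GL_inv_l: "x \<in> carrier GL_group \<Longrightarrow> mmul (GL_inv x) x = idm"
  unfolding GL_inv_def using GLG.l_inv by (simp add: GL_mult GL_one)

lemma GL_inv_mult: "x \<in> carrier GL_group \<Longrightarrow> y \<in> carrier GL_group \<Longrightarrow> GL_inv (mmul x y) = mmul (GL_inv y) (GL_inv x)"
  unfolding GL_inv_def using GLG.inv_mult_group by (simp add: GL_mult)

lemma GL_inv_idm: "GL_inv idm = idm"
  unfolding GL_inv_def using GLG.inv_one by (simp add: GL_one)

lemma GL_inv_cancel: "x \<in> carrier GL_group \<Longrightarrow> y \<in> carrier GL_group \<Longrightarrow> mmul (GL_inv x) (mmul x y) = y"
  by (simp add: GL_assoc[symmetric] GL_inv_closed GL_inv_l mmul_idm_left)

lemma idm_GL: "idm \<in> carrier GL_group" using GLG.one_closed by (simp add: GL_one)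

lemma GL_idm_right: "x \<in> carrier GL_group \<Longrightarrow> mmul x idm = x"
  using GLG.r_one by (simp add: GL_mult GL_one)

lemma GL_in_block_inv:
  assumes "M \<in> carrier GL_group"
  obtains n where "in_block n M" "in_block n (GL_inv M)"
  using common_block GL_fin_mat GL_inv_closed assms by metis

lemma conj_GL_GL: "Z \<in> carrier GL_group \<Longrightarrow> A \<in> carrier GL_group \<Longrightarrow> conj_GL Z A \<in> carrier GL_group"
  unfolding conj_GL_def by (intro GL_mmul_closed GL_inv_closed)

lemma conj_GL_mult:
  assumes "Z \<in> carrier GL_group" "A \<in> carrier GL_group" "B \<in> carrier GL_group"
  shows "conj_GL Z (mmul A B) = mmul (conj_GL Z A) (conj_GL Z B)"
  using assms by (simp add: conj_GL_def GL_assoc GL_mmul_closed GL_inv_closed GL_inv_cancel)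

lemma conj_GL_idm: "A \<in> carrier GL_group \<Longrightarrow> conj_GL idm A = A"
  by (simp add: conj_GL_def GL_inv_idm GL_idm_right mmul_idm_left)

lemma sq_invertible_GL:
  assumes b: "in_block n M" and inv: "sq_invertible n M"
  shows "M \<in> carrier GL_group"
proof -
  obtain \<beta> where \<beta>: "\<And>i k. i < n \<Longrightarrow> k < n \<Longrightarrow>
      (\<Sum>l<n. M i l * \<beta> l k) = idm i k \<and> (\<Sum>l<n. \<beta> i l * M l k) = idm i k"
    using inv unfolding sq_invertible_def idm_def by blast
  define N where "N = (\<lambda>i k. if i < n \<and> k < n then \<beta> i k else idm i k)"
  have bN: "in_block n N" by (simp add: in_block_def N_def)
  have "mmul M N = idm"
  proof (rule in_block_eqI[OF in_block_mmul[OF b bN] in_block_idm])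
    fix i k assume ik: "i < n" "k < n"
    have "mmul M N i k = (\<Sum>l<n. M i l * \<beta> l k)"
      using ik by (simp add: mmul_eq_blk_mult[OF b] blk_mult_def N_def)
    then show "mmul M N i k = idm i k" using \<beta>[OF ik] by simp
  qed
  moreover have "mmul N M = idm"
  proof (rule in_block_eqI[OF in_block_mmul[OF bN b] in_block_idm])
    fix i k assume ik: "i < n" "k < n"
    have "mmul N M i k = blk_mult n N M i k" by (rule mmul_eq_blk_mult[OF bN ik(1)])
    also have "\<dots> = (\<Sum>l<n. \<beta> i l * M l k)"
      unfolding blk_mult_def by (intro sum.cong) (auto simp: N_def ik)
    finally show "mmul N M i k = idm i k" using \<beta>[OF ik] by simp
  qed
  ultimately show ?thesis using b bN by (intro GL_memI) (auto simp: fin_mat_in_block)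
qed

section \<open>Elementary matrices and \<open>K\<^sub>1\<close>\<close>

definition transv :: "'a::ring_1 vec \<Rightarrow> 'a vec \<Rightarrow> 'a mat" where
  "transv a b = (\<lambda>i k. idm i k + a i * b k)"

definition vec_in_block :: "nat \<Rightarrow> 'a::ring_1 vec \<Rightarrow> bool" where
  "vec_in_block n a \<longleftrightarrow> (\<forall>i. n \<le> i \<longrightarrow> a i = 0)"

definition unit_vec :: "nat \<Rightarrow> 'a::ring_1 vec" where
  "unit_vec t = (\<lambda>k. if k = t then 1 else 0)"

definition dot :: "nat \<Rightarrow> 'a::ring_1 vec \<Rightarrow> 'a vec \<Rightarrow> 'a" where
  "dot n b a = (\<Sum>l<n. b l * a l)"

definition mat_vec :: "nat \<Rightarrow> 'a::ring_1 mat \<Rightarrow> 'a vec \<Rightarrow> 'a vec" where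
  "mat_vec n Z a = (\<lambda>i. \<Sum>l<n. Z i l * a l)"

definition vec_mat :: "nat \<Rightarrow> 'a::ring_1 vec \<Rightarrow> 'a mat \<Rightarrow> 'a vec" where
  "vec_mat n b Z = (\<lambda>k. \<Sum>l<n. b l * Z l k)"

lemma vec_in_block_mono: "vec_in_block n a \<Longrightarrow> n \<le> m \<Longrightarrow> vec_in_block m a"
  by (simp add: vec_in_block_def)

lemma vec_in_block_unit_vec: "t < n \<Longrightarrow> vec_in_block n (unit_vec t)" by (simp add: vec_in_block_def unit_vec_def)

lemma vec_in_block_uminus: "vec_in_block n a \<Longrightarrow> vec_in_block n (\<lambda>i. - a i)" by (simp add: vec_in_block_def)

lemma in_block_transv: "vec_in_block n a \<Longrightarrow> vec_in_block n b \<Longrightarrow> in_block n (transv a b)"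
  by (simp add: in_block_def vec_in_block_def transv_def)

lemma sum_unit_vec_right: "(\<Sum>l<n. f l * unit_vec t l) = (if t < n then f t else 0)"
  by (simp add: unit_vec_def if_distrib[where f="\<lambda>x. _ * x"] sum.delta' cong: if_cong)

lemma sum_unit_vec_left: "(\<Sum>l<n. unit_vec t l * f l) = (if t < n then f t else 0)"
  by (simp add: unit_vec_def if_distrib[where f="\<lambda>x. x * _"] sum.delta cong: if_cong)

lemma blk_mult_transv_left: "i < n \<Longrightarrow> blk_mult n (transv a b) Z i k = Z i k + a i * (\<Sum>l<n. b l * Z l k)"
  by (simp add: blk_mult_def transv_def distrib_right sum.distrib sum_idm_left sum_distrib_left mult.assoc)

lemma blk_mult_transv_right: "k < n \<Longrightarrow> blk_mult n Z (transv a b) i k = Z i k + (\<Sum>l<n. Z i l * a l) * b k"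
  by (simp add: blk_mult_def transv_def distrib_left sum.distrib sum_idm_right sum_distrib_right mult.assoc)

lemma sum_vec_in_block_right: "vec_in_block n a \<Longrightarrow> n \<le> m \<Longrightarrow> (\<Sum>l<m. f l * a l) = (\<Sum>l<n. f l * a l)"
  by (rule sum.mono_neutral_right) (auto simp: vec_in_block_def)

lemma mmul_transv_transv:
  assumes "vec_in_block n a" "vec_in_block n b" "vec_in_block n c" "vec_in_block n d"
  shows "mmul (transv a b) (transv c d) = (\<lambda>i k. idm i k + a i * b k + c i * d k + a i * dot n b c * d k)"
proof (rule in_block_eqI[of n])
  show "in_block n (mmul (transv a b) (transv c d))" using assms by (intro in_block_mmul in_block_transv)
  show "in_block n (\<lambda>i k. idm i k + a i * b k + c i * d k + a i * dot n b c * d k)"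
    using assms by (simp add: in_block_def vec_in_block_def)
  fix i k assume ik: "i < n" "k < n"
  have "(\<Sum>l<n. b l * transv c d l k) = b k + dot n b c * d k"
    using ik by (simp add: transv_def distrib_left sum.distrib sum_idm_right dot_def sum_distrib_right mult.assoc)
  moreover have "mmul (transv a b) (transv c d) i k = blk_mult n (transv a b) (transv c d) i k"
    by (rule mmul_eq_blk_mult[OF in_block_transv[OF assms(1,2)] ik(1)])
  moreover have "blk_mult n (transv a b) (transv c d) i k = transv c d i k + a i * (\<Sum>l<n. b l * transv c d l k)"
    by (rule blk_mult_transv_left[OF ik(1)])
  ultimately show "mmul (transv a b) (transv c d) i k = idm i k + a i * b k + c i * d k + a i * dot n b c * d k"
    by (simp add: transv_def distrib_left algebra_simps)
qed

lemma transv_inv: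
  assumes "vec_in_block n a" "vec_in_block n b" "dot n b a = 0"
  shows "mmul (transv a b) (transv (\<lambda>i. - a i) b) = idm" "mmul (transv (\<lambda>i. - a i) b) (transv a b) = idm"
proof -
  have d: "dot n b (\<lambda>i. - a i) = 0" using assms(3) by (simp add: dot_def sum_negf)
  show "mmul (transv a b) (transv (\<lambda>i. - a i) b) = idm"
    using assms d by (simp add: mmul_transv_transv[of n] vec_in_block_uminus)
  show "mmul (transv (\<lambda>i. - a i) b) (transv a b) = idm"
    using assms by (simp add: mmul_transv_transv[of n] vec_in_block_uminus)
qed

lemma transv_GL:
  assumes "vec_in_block n a" "vec_in_block n b" "dot n b a = 0"
  shows "transv a b \<in> carrier GL_group"
  using transv_inv[OF assms] in_block_transv[OF assms(1,2)] in_block_transv[OF vec_in_block_uminus[OF assms(1)] assms(2)]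
  by (intro GL_memI[of _ "transv (\<lambda>i. - a i) b"]) (auto simp: fin_mat_in_block)

lemma transv_GL_inv:
  assumes "vec_in_block n a" "vec_in_block n b" "dot n b a = 0"
  shows "GL_inv (transv a b) = transv (\<lambda>i. - a i) b"
proof -
  have d: "dot n b (\<lambda>i. - a i) = 0" using assms(3) by (simp add: dot_def sum_negf)
  show ?thesis using transv_GL[OF assms] transv_GL[OF vec_in_block_uminus[OF assms(1)] assms(2) d] transv_inv[OF assms]
    by (intro GL_inv_eq) auto
qed

lemma blk_mult_inverse: assumes "in_block n Z" "in_block n Zi" "mmul Z Zi = idm" "i < n" "k < n"
  shows "blk_mult n Z Zi i k = idm i k"
  using assms mmul_eq_blk_mult[OF assms(1), of i Zi k] by simp

lemma vec_in_block_mat_vec: "in_block n Z \<Longrightarrow> vec_in_block n (mat_vec n Z a)"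
  unfolding vec_in_block_def mat_vec_def
proof (intro allI impI)
  fix i assume "in_block n Z" "n \<le> i"
  then have "\<And>l. l < n \<Longrightarrow> Z i l = 0" by (auto simp: in_block_out idm_def)
  then show "(\<Sum>l<n. Z i l * a l) = 0" by simp
qed

lemma vec_in_block_vec_mat: "in_block n Z \<Longrightarrow> vec_in_block n (vec_mat n b Z)"
  unfolding vec_in_block_def vec_mat_def
proof (intro allI impI)
  fix i assume "in_block n Z" "n \<le> i"
  then have "\<And>l. l < n \<Longrightarrow> Z l i = 0" by (auto simp: in_block_out idm_def)
  then show "(\<Sum>l<n. b l * Z l i) = 0" by simp
qed

lemma conj_transv:
  assumes Z: "in_block n Z" "in_block n Zi" "mmul Z Zi = idm" and ab: "vec_in_block n a" "vec_in_block n b"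
  shows "mmul Z (mmul (transv a b) Zi) = transv (mat_vec n Z a) (vec_mat n b Zi)"
proof (rule in_block_eqI[of n])
  show "in_block n (mmul Z (mmul (transv a b) Zi))" using Z ab by (intro in_block_mmul in_block_transv)
  show "in_block n (transv (mat_vec n Z a) (vec_mat n b Zi))" using Z by (intro in_block_transv vec_in_block_mat_vec vec_in_block_vec_mat)
  fix i k assume ik: "i < n" "k < n"
  have inner: "\<And>l. l < n \<Longrightarrow> mmul (transv a b) Zi l k = Zi l k + a l * vec_mat n b Zi k"
    using ik ab by (simp add: mmul_eq_blk_mult[OF in_block_transv] blk_mult_transv_left vec_mat_def)
  have "mmul Z (mmul (transv a b) Zi) i k = (\<Sum>l<n. Z i l * mmul (transv a b) Zi l k)"
    using ik by (simp add: mmul_eq_blk_mult[OF Z(1)] blk_mult_def)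
  also have "\<dots> = (\<Sum>l<n. Z i l * Zi l k + Z i l * a l * vec_mat n b Zi k)"
    by (intro sum.cong) (auto simp: inner distrib_left mult.assoc)
  also have "\<dots> = blk_mult n Z Zi i k + mat_vec n Z a i * vec_mat n b Zi k"
    by (simp add: sum.distrib blk_mult_def mat_vec_def sum_distrib_right)
  also have "\<dots> = transv (mat_vec n Z a) (vec_mat n b Zi) i k"
    using blk_mult_inverse[OF Z ik] by (simp add: transv_def)
  finally show "mmul Z (mmul (transv a b) Zi) i k = transv (mat_vec n Z a) (vec_mat n b Zi) i k" .
qed

lemma dot_conj:
  assumes Z: "in_block n Z" "in_block n Zi" "mmul Zi Z = idm" and ab: "vec_in_block n a" "vec_in_block n b"
  shows "dot n (vec_mat n b Zi) (mat_vec n Z a) = dot n b a"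
proof -
  have "dot n (vec_mat n b Zi) (mat_vec n Z a) = (\<Sum>k<n. (\<Sum>l<n. b l * Zi l k) * (\<Sum>l'<n. Z k l' * a l'))"
    by (simp add: dot_def vec_mat_def mat_vec_def)
  also have "\<dots> = (\<Sum>k<n. \<Sum>l<n. \<Sum>l'<n. b l * (Zi l k * Z k l') * a l')"
    by (simp add: sum_product mult.assoc)
  also have "\<dots> = (\<Sum>l<n. \<Sum>k<n. \<Sum>l'<n. b l * (Zi l k * Z k l') * a l')"
    by (rule sum.swap)
  also have "\<dots> = (\<Sum>l<n. \<Sum>l'<n. \<Sum>k<n. b l * (Zi l k * Z k l') * a l')"
    by (intro sum.cong refl sum.swap)
  also have "\<dots> = (\<Sum>l<n. \<Sum>l'<n. b l * blk_mult n Zi Z l l' * a l')"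
    by (simp add: blk_mult_def sum_distrib_left sum_distrib_right)
  also have "\<dots> = (\<Sum>l<n. \<Sum>l'<n. b l * idm l l' * a l')"
    by (intro sum.cong refl) (simp add: blk_mult_inverse[OF Z(2,1,3)])
  also have "\<dots> = dot n b a"
    unfolding dot_def by (intro sum.cong refl) (simp add: mult.assoc flip: sum_distrib_left add: sum_idm_left)
  finally show ?thesis .
qed

abbreviation derived_GL :: "'a::ring_1 mat set" where
  "derived_GL \<equiv> derived GL_group (carrier GL_group)"

definition vtrunc :: "nat \<Rightarrow> 'a::ring_1 vec \<Rightarrow> 'a vec" where
  "vtrunc t g = (\<lambda>i. if i < t then g i else 0)"

definition col_transv :: "nat \<Rightarrow> 'a::ring_1 vec \<Rightarrow> 'a mat" where
  "col_transv t g = transv (vtrunc t g) (unit_vec t)"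

definition row_transv :: "nat \<Rightarrow> 'a::ring_1 vec \<Rightarrow> 'a mat" where
  "row_transv t g = transv (unit_vec t) (vtrunc t g)"

lemma vec_in_block_vtrunc: "t \<le> n \<Longrightarrow> vec_in_block n (vtrunc t g)" by (simp add: vec_in_block_def vtrunc_def)

lemma sum_idm_left_vec: assumes "vec_in_block n a" shows "(\<Sum>l<n. idm i l * a l) = a i"
proof (cases "i < n")
  case True then show ?thesis by (rule sum_idm_left)
next
  case False then show ?thesis using assms by (auto simp: vec_in_block_def idm_def intro!: sum.neutral)
qed

lemma sum_idm_right_vec: assumes "vec_in_block n a" shows "(\<Sum>l<n. a l * idm l k) = a k"
proof (cases "k < n")
  case True then show ?thesis by (rule sum_idm_right)
next
  case False then show ?thesis using assms by (auto simp: vec_in_block_def idm_def intro!: sum.neutral)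
qed

lemma mat_vec_transv: "vec_in_block n a \<Longrightarrow> mat_vec n (transv c d) a = (\<lambda>i. a i + c i * dot n d a)"
  by (simp add: mat_vec_def transv_def distrib_right sum.distrib sum_idm_left_vec dot_def sum_distrib_left mult.assoc)

lemma vec_mat_transv: "vec_in_block n b \<Longrightarrow> vec_mat n b (transv c d) = (\<lambda>k. b k + dot n b c * d k)"
  by (simp add: vec_mat_def transv_def distrib_left sum.distrib sum_idm_right_vec dot_def sum_distrib_right mult.assoc)

lemma dot_unit_vec_left: "dot n (unit_vec t) a = (if t < n then a t else 0)"
  by (simp add: dot_def sum_unit_vec_left)

lemma dot_unit_vec_right: "dot n a (unit_vec t) = (if t < n then a t else 0)"
  by (simp add: dot_def sum_unit_vec_right)

lemma dot_uminus_right: "dot n a (\<lambda>i. - b i) = - dot n a b"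
  by (simp add: dot_def sum_negf)

lemma transv_commutator_derived_GL:
  assumes P: "vec_in_block n a" "vec_in_block n b" "dot n b a = 0"
    and Q: "vec_in_block n c" "vec_in_block n d" "dot n d c = 0"
  shows "mmul (transv a b) (mmul (transv c d) (mmul (transv (\<lambda>i. - a i) b) (transv (\<lambda>i. - c i) d))) \<in> derived_GL"
proof -
  let ?P = "transv a b" and ?Q = "transv c d"
  have PG: "?P \<in> carrier GL_group" and QG: "?Q \<in> carrier GL_group"
    using transv_GL P Q by auto
  have "?P \<otimes>\<^bsub>GL_group\<^esub> ?Q \<otimes>\<^bsub>GL_group\<^esub> inv\<^bsub>GL_group\<^esub> ?P \<otimes>\<^bsub>GL_group\<^esub> inv\<^bsub>GL_group\<^esub> ?Q \<in> derived_GL"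
    unfolding derived_def using PG QG by (intro generate.incl) blast
  also have "?P \<otimes>\<^bsub>GL_group\<^esub> ?Q \<otimes>\<^bsub>GL_group\<^esub> inv\<^bsub>GL_group\<^esub> ?P \<otimes>\<^bsub>GL_group\<^esub> inv\<^bsub>GL_group\<^esub> ?Q
     = ?P \<otimes>\<^bsub>GL_group\<^esub> (?Q \<otimes>\<^bsub>GL_group\<^esub> (inv\<^bsub>GL_group\<^esub> ?P \<otimes>\<^bsub>GL_group\<^esub> inv\<^bsub>GL_group\<^esub> ?Q))"
    using PG QG by (simp add: GLG.m_assoc)
  finally show ?thesis using transv_GL_inv[OF P] transv_GL_inv[OF Q] by (simp add: GL_mult flip: GL_inv_def)
qed

text \<open>With the auxiliary index \<open>m = t + 1\<close>, the elementary matrix \<open>I + g e\<^sub>t\<^sup>T\<close> is the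
  commutator of \<open>I + g e\<^sub>m\<^sup>T\<close> and \<open>I + e\<^sub>m e\<^sub>t\<^sup>T\<close>, and similarly for rows.\<close>

lemma col_transv_derived_GL: "col_transv t g \<in> derived_GL"
proof -
  define m where "m = Suc t"
  define n where "n = Suc m"
  define g' where "g' = vtrunc t g"
  let ?em = "unit_vec m" and ?et = "unit_vec t"
  let ?Q = "transv ?em ?et" and ?Pi = "transv (\<lambda>i. - g' i) ?em" and ?Qi = "transv (\<lambda>i. - ?em i) ?et"
  have v: "vec_in_block n g'" "vec_in_block n ?em" "vec_in_block n ?et" "vec_in_block n (\<lambda>i. - g' i)"
    "vec_in_block n (\<lambda>i. - ?em i)" "vec_in_block n (\<lambda>k. ?em k - ?et k)"
    using vec_in_block_vtrunc[of t n g]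
    by (auto simp: g'_def n_def m_def vec_in_block_def unit_vec_def intro: vec_in_block_uminus)
  have g'm: "g' m = 0" "g' t = 0" by (auto simp: g'_def m_def vtrunc_def)
  have d1: "dot n ?em g' = 0" using g'm by (simp add: dot_unit_vec_left)
  have d2: "dot n ?et ?em = 0" by (simp add: dot_unit_vec_left) (simp add: unit_vec_def m_def)
  have "mmul ?Q (mmul ?Pi ?Qi) = transv (mat_vec n ?Q (\<lambda>i. - g' i)) (vec_mat n ?em ?Qi)"
    using transv_inv[OF v(2,3) d2] v by (intro conj_transv in_block_transv) auto
  also have "mat_vec n ?Q (\<lambda>i. - g' i) = (\<lambda>i. - g' i)"
    using v g'm by (simp add: mat_vec_transv dot_unit_vec_left n_def)
  also have "vec_mat n ?em ?Qi = (\<lambda>k. ?em k - ?et k)"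
    by (simp add: vec_mat_transv[OF v(2)] dot_uminus_right dot_unit_vec_left) (simp add: n_def unit_vec_def fun_eq_iff)
  finally have comm: "mmul ?Q (mmul ?Pi ?Qi) = transv (\<lambda>i. - g' i) (\<lambda>k. ?em k - ?et k)" .
  have "mmul (transv g' ?em) (transv (\<lambda>i. - g' i) (\<lambda>k. ?em k - ?et k)) = transv g' ?et"
    unfolding mmul_transv_transv[OF v(1,2,4,6)] using g'm
    by (simp add: dot_uminus_right dot_unit_vec_left) (simp add: transv_def algebra_simps fun_eq_iff)
  then have "mmul (transv g' ?em) (mmul ?Q (mmul ?Pi ?Qi)) = col_transv t g"
    unfolding comm by (simp add: col_transv_def g'_def)
  moreover have "mmul (transv g' ?em) (mmul ?Q (mmul ?Pi ?Qi)) \<in> derived_GL"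
    using v d1 d2 by (intro transv_commutator_derived_GL) auto
  ultimately show ?thesis by simp
qed

lemma row_transv_derived_GL: "row_transv t g \<in> derived_GL"
proof -
  define m where "m = Suc t"
  define n where "n = Suc m"
  define g' where "g' = vtrunc t g"
  let ?em = "unit_vec m" and ?et = "unit_vec t"
  let ?Q = "transv ?em g'" and ?Pi = "transv (\<lambda>i. - ?et i) ?em" and ?Qi = "transv (\<lambda>i. - ?em i) g'"
  have v: "vec_in_block n g'" "vec_in_block n ?em" "vec_in_block n ?et" "vec_in_block n (\<lambda>i. - ?et i)"
    "vec_in_block n (\<lambda>i. - ?em i)" "vec_in_block n (\<lambda>k. ?em k - g' k)"
    using vec_in_block_vtrunc[of t n g]
    by (auto simp: g'_def n_def m_def vec_in_block_def unit_vec_def intro: vec_in_block_uminus)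
  have g'm: "g' m = 0" "g' t = 0" by (auto simp: g'_def m_def vtrunc_def)
  have d1: "dot n ?em ?et = 0" by (simp add: dot_unit_vec_left) (simp add: unit_vec_def m_def)
  have d2: "dot n g' ?em = 0" using g'm by (simp add: dot_unit_vec_right)
  have "mmul ?Q (mmul ?Pi ?Qi) = transv (mat_vec n ?Q (\<lambda>i. - ?et i)) (vec_mat n ?em ?Qi)"
    using transv_inv[OF v(2,1) d2] v by (intro conj_transv in_block_transv) auto
  also have "mat_vec n ?Q (\<lambda>i. - ?et i) = (\<lambda>i. - ?et i)"
    by (simp add: mat_vec_transv[OF v(4)] dot_uminus_right dot_unit_vec_right g'm)
  also have "vec_mat n ?em ?Qi = (\<lambda>k. ?em k - g' k)"
    by (simp add: vec_mat_transv[OF v(2)] dot_uminus_right dot_unit_vec_left) (simp add: n_def unit_vec_def fun_eq_iff)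
  finally have comm: "mmul ?Q (mmul ?Pi ?Qi) = transv (\<lambda>i. - ?et i) (\<lambda>k. ?em k - g' k)" .
  have "mmul (transv ?et ?em) (transv (\<lambda>i. - ?et i) (\<lambda>k. ?em k - g' k)) = transv ?et g'"
    unfolding mmul_transv_transv[OF v(3,2,4,6)] using g'm
    by (simp add: dot_uminus_right dot_unit_vec_left)
       (simp add: transv_def algebra_simps fun_eq_iff unit_vec_def m_def)
  then have "mmul (transv ?et ?em) (mmul ?Q (mmul ?Pi ?Qi)) = row_transv t g"
    unfolding comm by (simp add: row_transv_def g'_def)
  moreover have "mmul (transv ?et ?em) (mmul ?Q (mmul ?Pi ?Qi)) \<in> derived_GL"
    using v d1 d2 by (intro transv_commutator_derived_GL) auto
  ultimately show ?thesis by simp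
qed

lemma K1_comm: "comm_group (K1 :: 'a::ring_1 mat set monoid)"
  unfolding K1_def by (rule GLG.derived_quot_is_comm_group)

interpretation K1G: comm_group "K1 :: 'a::ring_1 mat set monoid"
  by (rule K1_comm)

lemma derived_GL_normal: "derived_GL \<lhd> GL_group" by (rule GLG.derived_self_is_normal)

lemma derived_GL_subgroup: "subgroup derived_GL GL_group" using derived_GL_normal normal_def by blast

lemma K1class_hom: "K1class \<in> hom GL_group K1"
  unfolding K1class_def[abs_def] K1_def by (rule normal.r_coset_hom_Mod[OF derived_GL_normal])

lemma K1class_mult: "M \<in> carrier GL_group \<Longrightarrow> N \<in> carrier GL_group \<Longrightarrow>
  K1class (mmul M N) = K1class M \<otimes>\<^bsub>K1\<^esub> K1class N"
  using hom_mult[OF K1class_hom] by (simp add: GL_mult)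

lemma K1class_carrier: "M \<in> carrier GL_group \<Longrightarrow> K1class M \<in> carrier K1"
  using hom_in_carrier[OF K1class_hom] by blast

lemma K1_one: "\<one>\<^bsub>K1\<^esub> = derived_GL" by (simp add: K1_def)

lemma K1class_derived_GL: "M \<in> derived_GL \<Longrightarrow> K1class M = \<one>\<^bsub>K1\<^esub>"
  unfolding K1class_def K1_one by (rule subgroup.rcos_const[OF derived_GL_subgroup GL_group_is_group])

lemma K1class_one_iff: "M \<in> carrier GL_group \<Longrightarrow> K1class M = \<one>\<^bsub>K1\<^esub> \<longleftrightarrow> M \<in> derived_GL"
  using K1class_derived_GL GLG.coset_join1[OF _ _ derived_GL_subgroup] unfolding K1class_def K1_one by blast

lemma K1_carrier: "carrier K1 = K1class ` carrier GL_group"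
  by (simp add: K1_def K1class_def[abs_def] carrier_FactGroup)

definition diag_mat :: "nat \<Rightarrow> 'a::ring_1 \<Rightarrow> 'a mat" where
  "diag_mat t x = (\<lambda>i k. if i = t \<and> k = t then x else idm i k)"

lemma diag_mat_transv: "diag_mat t x = transv (unit_vec t) (\<lambda>k. if k = t then x - 1 else 0)"
  by (auto simp: diag_mat_def transv_def unit_vec_def idm_def fun_eq_iff)

lemma unit_mat_diag_mat: "unit_mat x = diag_mat 0 x"
  by (simp add: unit_mat_def diag_mat_def fun_eq_iff)

lemma in_block_diag_mat: "t < n \<Longrightarrow> in_block n (diag_mat t x)"
  by (auto simp: in_block_def diag_mat_def)

lemma mmul_diag_mat_left: "mmul (diag_mat t x) M = (\<lambda>i k. if i = t then x * M t k else M i k)"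
proof (intro ext)
  fix i k
  have b: "in_block (Suc t) (diag_mat t x)" by (simp add: in_block_diag_mat)
  show "mmul (diag_mat t x) M i k = (if i = t then x * M t k else M i k)"
  proof (cases "i < Suc t")
    case True
    have "mmul (diag_mat t x) M i k = blk_mult (Suc t) (diag_mat t x) M i k" using True by (simp add: mmul_in_block[OF b])
    also have "\<dots> = M i k + unit_vec t i * (\<Sum>l<Suc t. (if l = t then x - 1 else 0) * M l k)"
      unfolding diag_mat_transv by (rule blk_mult_transv_left[OF True])
    also have "\<dots> = (if i = t then x * M t k else M i k)"
      by (simp add: if_distrib[where f="\<lambda>x. x * _"] sum.delta cong: if_cong) (simp add: unit_vec_def algebra_simps)
    finally show ?thesis .
  next
    case False
    then show ?thesis by (simp add: mmul_in_block[OF b])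
  qed
qed

lemma diag_mat_mult: "mmul (diag_mat t x) (diag_mat t y) = diag_mat t (x * y)"
  by (simp only: mmul_diag_mat_left) (auto simp: diag_mat_def fun_eq_iff idm_def)

lemma diag_mat_one: "diag_mat t 1 = idm" by (auto simp: diag_mat_def idm_def fun_eq_iff)

lemma diag_mat_GL: assumes "ring_unit x" shows "diag_mat t x \<in> carrier GL_group"
proof -
  have "mmul (diag_mat t x) (diag_mat t (ring_inv x)) = idm" "mmul (diag_mat t (ring_inv x)) (diag_mat t x) = idm"
    using assms by (simp_all add: diag_mat_mult diag_mat_one ring_inv_r ring_inv_l)
  moreover have "fin_mat (diag_mat t x)" "fin_mat (diag_mat t (ring_inv x))"
    using in_block_diag_mat[of t "Suc t"] fin_mat_in_block by blast+
  ultimately show ?thesis by (meson GL_memI)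
qed

definition swap0 :: "nat \<Rightarrow> nat \<Rightarrow> nat" where
  "swap0 t i = (if i = 0 then t else if i = t then 0 else i)"

definition swap_mat :: "nat \<Rightarrow> 'a::ring_1 mat" where
  "swap_mat t = (\<lambda>i k. idm (swap0 t i) k)"

lemma swap0_swap0: "swap0 t (swap0 t i) = i" by (simp add: swap0_def)
lemma swap0_lt: "swap0 t i < Suc t \<longleftrightarrow> i < Suc t" by (auto simp: swap0_def)
lemma swap0_big: "t < i \<Longrightarrow> swap0 t i = i" by (simp add: swap0_def)

lemma in_block_swap_mat: "in_block (Suc t) (swap_mat t)"
  by (auto simp: in_block_def swap_mat_def swap0_def idm_def)

lemma mmul_swap_mat_left: "mmul (swap_mat t) M = (\<lambda>i k. M (swap0 t i) k)"
proof (intro ext)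
  fix i k
  show "mmul (swap_mat t) M i k = M (swap0 t i) k"
  proof (cases "i < Suc t")
    case True
    then have "swap0 t i < Suc t" by (simp add: swap0_lt)
    then show ?thesis
      using True by (simp add: mmul_in_block[OF in_block_swap_mat])
        (simp only: blk_mult_def swap_mat_def sum_idm_left[OF \<open>swap0 t i < Suc t\<close>])
  next
    case False
    then show ?thesis by (simp add: mmul_in_block[OF in_block_swap_mat] swap0_big)
  qed
qed

lemma swap_mat_swap_mat: "mmul (swap_mat t) (swap_mat t) = idm"
  by (simp only: mmul_swap_mat_left) (simp add: swap_mat_def swap0_swap0 fun_eq_iff)

lemma swap_mat_GL: "swap_mat t \<in> carrier GL_group"
  using swap_mat_swap_mat in_block_swap_mat by (intro GL_memI[of _ "swap_mat t"]) (auto simp: fin_mat_in_block)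

lemma idm_swap0: "idm (swap0 t l) k = idm l (swap0 t k)"
  by (auto simp: idm_def swap0_def)

lemma mmul_swap_mat_right: assumes "in_block n M" "t < n" shows "mmul M (swap_mat t) = (\<lambda>i k. M i (swap0 t k))"
proof (intro ext)
  fix i k
  show "mmul M (swap_mat t) i k = M i (swap0 t k)"
  proof (cases "i < n")
    case True
    show ?thesis
    proof (cases "k < n")
      case True
      then have "swap0 t k < n" using assms(2) by (auto simp: swap0_def)
      then show ?thesis using \<open>i < n\<close> by (simp add: mmul_in_block[OF assms(1)] blk_mult_def swap_mat_def idm_swap0 sum_idm_right)
    next
      case False
      then have "swap0 t k = k" using assms(2) by (auto simp: swap0_def)
      moreover have "blk_mult n M (swap_mat t) i k = 0"
        by (rule blk_mult_idm_out[OF in_block_mono[OF in_block_swap_mat, of t n]]) (use assms False \<open>i < n\<close> in auto)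
      ultimately show ?thesis using \<open>i < n\<close> False by (simp add: mmul_in_block[OF assms(1)] in_block_out[OF assms(1)] idm_def)
    qed
  next
    case False
    then have "swap0 t i = i" using assms(2) by (auto simp: swap0_def)
    then show ?thesis using False by (simp add: mmul_in_block[OF assms(1)] in_block_out[OF assms(1)] swap_mat_def idm_swap0)
  qed
qed

lemma swap_mat_diag_mat_swap_mat: "mmul (swap_mat t) (mmul (diag_mat t x) (swap_mat t)) = unit_mat x"
  by (simp only: mmul_swap_mat_right[OF in_block_diag_mat[of t "Suc t"] lessI] mmul_swap_mat_left)
     (auto simp: unit_mat_def diag_mat_def fun_eq_iff swap0_def idm_def)

lemma K1class_diag_mat: assumes "ring_unit x"
  shows "K1class (diag_mat t x) = K1class (unit_mat x)"
proof -
  have D: "diag_mat t x \<in> carrier GL_group" by (rule diag_mat_GL[OF assms])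
  have "K1class (unit_mat x) = K1class (swap_mat t) \<otimes>\<^bsub>K1\<^esub> (K1class (diag_mat t x) \<otimes>\<^bsub>K1\<^esub> K1class (swap_mat t))"
    using swap_mat_diag_mat_swap_mat[of t x] D swap_mat_GL by (metis K1class_mult GLG.m_closed GL_mult)
  also have "\<dots> = K1class (diag_mat t x) \<otimes>\<^bsub>K1\<^esub> (K1class (swap_mat t) \<otimes>\<^bsub>K1\<^esub> K1class (swap_mat t))"
    using D swap_mat_GL K1class_carrier by (metis K1G.m_lcomm)
  also have "K1class (swap_mat t) \<otimes>\<^bsub>K1\<^esub> K1class (swap_mat t) = \<one>\<^bsub>K1\<^esub>"
    using swap_mat_swap_mat[of t] swap_mat_GL K1class_mult[of "swap_mat t" "swap_mat t"] K1class_derived_GL[of idm]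
    by (metis GLG.one_closed GL_one GLG.subgroupE(3) derived_GL_subgroup subgroup.one_closed)
  finally show ?thesis using K1class_carrier[OF D] by simp
qed

lemma unit_mat_GL: "ring_unit x \<Longrightarrow> unit_mat x \<in> carrier GL_group"
  unfolding unit_mat_diag_mat by (rule diag_mat_GL)

lemma unit_mat_mult: "unit_mat (x * y) = mmul (unit_mat x) (unit_mat y)"
  by (simp add: unit_mat_diag_mat diag_mat_mult)

lemma K1class_unit_mult: "ring_unit x \<Longrightarrow> ring_unit y \<Longrightarrow>
  K1class (unit_mat (x * y)) = K1class (unit_mat x) \<otimes>\<^bsub>K1\<^esub> K1class (unit_mat y)"
  by (simp add: unit_mat_mult K1class_mult unit_mat_GL)

lemma K1class_unit_one: "K1class (unit_mat 1) = \<one>\<^bsub>K1\<^esub>"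
  using K1class_derived_GL[OF subgroup.one_closed[OF derived_GL_subgroup]]
  by (simp add: unit_mat_diag_mat diag_mat_one GL_one)

lemma K1class_unit_ring_inv:
  assumes "ring_unit x"
  shows "K1class (unit_mat (ring_inv x)) = inv\<^bsub>K1\<^esub> K1class (unit_mat x)"
proof (rule K1G.inv_equality[symmetric])
  show "K1class (unit_mat (ring_inv x)) \<otimes>\<^bsub>K1\<^esub> K1class (unit_mat x) = \<one>\<^bsub>K1\<^esub>"
    using assms by (simp flip: K1class_unit_mult add: ring_unit_ring_inv ring_inv_l K1class_unit_one)
qed (use assms in \<open>simp_all add: K1class_carrier unit_mat_GL ring_unit_ring_inv\<close>)

lemma derived_GL_GL: "d \<in> derived_GL \<Longrightarrow> d \<in> carrier GL_group"
  by (rule subgroup.mem_carrier[OF derived_GL_subgroup])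

definition unit_class :: "'a::ring_1 \<Rightarrow> 'a mat set" where
  "unit_class u = K1class (unit_mat u)"

lemma unit_class_hom: "unit_class \<in> hom units_grp K1"
  by (rule homI) (simp_all add: unit_class_def units_grp_carrier units_grp_mult K1class_carrier unit_mat_GL
      K1class_unit_mult)

section \<open>Schur complements and pivot products\<close>

definition schur :: "nat \<Rightarrow> 'a::ring_1 mat \<Rightarrow> 'a mat" where
  "schur n X = (\<lambda>i k. X i k - X i n * ring_inv (X n n) * X n k)"

text \<open>Gaussian elimination from the bottom right corner: \<open>pivot_prod n X\<close> multiplies the pivots of
  the successive Schur complements.  For matrices congruent to the identity modulo \<open>\<epsilon>\<close> all pivots are
  units, and modulo \<open>C\<close> the product behaves like a determinant.\<close>

primrec pivot_prod :: "nat \<Rightarrow> 'a::ring_1 mat \<Rightarrow> 'a" where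
  "pivot_prod 0 X = 1"
| "pivot_prod (Suc n) X = pivot_prod n (schur n X) * X n n"

lemma pivot_prod_cong: "(\<And>i k. i < n \<Longrightarrow> k < n \<Longrightarrow> X i k = Y i k) \<Longrightarrow> pivot_prod n X = pivot_prod n Y"
proof (induction n arbitrary: X Y)
  case 0 then show ?case by simp
next
  case (Suc n)
  have "pivot_prod n (schur n X) = pivot_prod n (schur n Y)"
    by (rule Suc.IH) (simp add: schur_def Suc.prems)
  then show ?case by (simp add: Suc.prems)
qed

lemma pivot_prod_in_block: assumes "in_block n N" "n \<le> m" shows "pivot_prod m N = pivot_prod n N"
  using assms(2)
proof (induction m)
  case 0 then show ?case by simp
next
  case (Suc m)
  show ?case
  proof (cases "n = Suc m")
    case True then show ?thesis by simp
  next
    case False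
    then have nm: "n \<le> m" using Suc.prems by simp
    have "N m m = 1" using in_block_out[OF assms(1)] nm by (simp add: idm_def)
    moreover have "pivot_prod m (schur m N) = pivot_prod m N"
      by (rule pivot_prod_cong) (use in_block_out[OF assms(1)] nm in \<open>auto simp: schur_def idm_def\<close>)
    ultimately show ?thesis using Suc.IH[OF nm] by simp
  qed
qed

definition blk_restrict :: "nat \<Rightarrow> 'a::ring_1 mat \<Rightarrow> 'a mat" where
  "blk_restrict t S = (\<lambda>i k. if i < t \<and> k < t then S i k else idm i k)"

definition blk_diag :: "nat \<Rightarrow> 'a::ring_1 mat \<Rightarrow> 'a \<Rightarrow> 'a mat" where
  "blk_diag t S x = (\<lambda>i k. if i < t \<and> k < t then S i k else if i = t \<and> k = t then x else idm i k)"

definition pivot_col :: "nat \<Rightarrow> 'a::ring_1 mat \<Rightarrow> 'a vec" where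
  "pivot_col m X = (\<lambda>i. X i m * ring_inv (X m m))"

definition pivot_row :: "nat \<Rightarrow> 'a::ring_1 mat \<Rightarrow> 'a vec" where
  "pivot_row m X = (\<lambda>k. ring_inv (X m m) * X m k)"

lemma in_block_blk_restrict: "in_block t (blk_restrict t S)" by (simp add: in_block_def blk_restrict_def)
lemma in_block_blk_diag: "in_block (Suc t) (blk_diag t S x)" by (auto simp: in_block_def blk_diag_def)
lemma in_block_col_transv: "t < n \<Longrightarrow> in_block n (col_transv t g)"
  unfolding col_transv_def by (intro in_block_transv vec_in_block_vtrunc vec_in_block_unit_vec) auto
lemma in_block_row_transv: "t < n \<Longrightarrow> in_block n (row_transv t g)"
  unfolding row_transv_def by (intro in_block_transv vec_in_block_vtrunc vec_in_block_unit_vec) auto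

lemma blk_mult_col_transv_left: "i < Suc m \<Longrightarrow> blk_mult (Suc m) (col_transv m g) Z i k = Z i k + vtrunc m g i * Z m k"
  unfolding col_transv_def by (simp only: blk_mult_transv_left sum_unit_vec_left) simp

lemma blk_mult_row_transv_right: "k < Suc m \<Longrightarrow> blk_mult (Suc m) Z (row_transv m g) i k = Z i k + Z i m * vtrunc m g k"
  unfolding row_transv_def by (simp only: blk_mult_transv_right sum_unit_vec_right) simp

lemma blk_mult_blk_diag_left: assumes "i < Suc m"
  shows "blk_mult (Suc m) (blk_diag m S x) Z i k = (if i < m then blk_mult m S Z i k else x * Z m k)"
proof (cases "i < m")
  case True
  have "blk_mult (Suc m) (blk_diag m S x) Z i k = blk_mult m (blk_diag m S x) Z i k + blk_diag m S x i m * Z m k"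
    by (simp add: blk_mult_def)
  also have "\<dots> = blk_mult m S Z i k" using True by (simp add: blk_mult_def blk_diag_def idm_def)
  finally show ?thesis using True by simp
next
  case False
  then have "i = m" using assms by simp
  have "blk_mult m (blk_diag m S x) Z i k = 0" using \<open>i = m\<close> by (simp add: blk_mult_def blk_diag_def idm_def)
  then show ?thesis using \<open>i = m\<close> by (simp add: blk_mult_def blk_diag_def)
qed

lemma blk_mult_blk_diag_right: assumes "k < Suc m"
  shows "blk_mult (Suc m) Z (blk_diag m S y) i k = (if k < m then blk_mult m Z S i k else Z i m * y)"
proof (cases "k < m")
  case True
  have "blk_mult (Suc m) Z (blk_diag m S y) i k = blk_mult m Z (blk_diag m S y) i k + Z i m * blk_diag m S y m k"
    by (simp add: blk_mult_def)
  also have "\<dots> = blk_mult m Z S i k" using True by (simp add: blk_mult_def blk_diag_def idm_def)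
  finally show ?thesis using True by simp
next
  case False
  then have "k = m" using assms by simp
  have "blk_mult m Z (blk_diag m S y) i k = 0" using \<open>k = m\<close> by (simp add: blk_mult_def blk_diag_def idm_def)
  then show ?thesis using \<open>k = m\<close> by (simp add: blk_mult_def blk_diag_def)
qed

lemma blk_mult_pivot_factorization:
  assumes u: "ring_unit (X m m)" and ik: "i < Suc m" "k < Suc m"
  shows "blk_mult (Suc m) (col_transv m (pivot_col m X))
           (blk_mult (Suc m) (blk_diag m (schur m X) (X m m)) (row_transv m (pivot_row m X))) i k = X i k"
proof -
  let ?x = "X m m" and ?D = "blk_diag m (schur m X) (X m m)"
  let ?g = "vtrunc m (pivot_col m X)" and ?r = "vtrunc m (pivot_row m X)"
  have r: "?x * ring_inv ?x = 1" "ring_inv ?x * ?x = 1" using ring_inv_r[OF u] ring_inv_l[OF u] by auto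
  have "blk_mult (Suc m) (col_transv m (pivot_col m X))
          (blk_mult (Suc m) ?D (row_transv m (pivot_row m X))) i k
      = ?D i k + ?D i m * ?r k + ?g i * (?D m k + ?D m m * ?r k)"
    using ik by (simp add: blk_mult_col_transv_left blk_mult_row_transv_right)
  also have "\<dots> = X i k"
  proof (cases "i < m"; cases "k < m")
    assume "i < m" "k < m"
    moreover have "X i m * (ring_inv ?x * ?x) * ring_inv ?x * X m k = X i m * ring_inv ?x * X m k"
      using r by simp
    ultimately show ?thesis
      by (simp add: blk_diag_def vtrunc_def schur_def pivot_col_def pivot_row_def idm_def mult.assoc)
  next
    assume "i < m" "\<not> k < m"
    then have "k = m" using ik by simp
    with \<open>i < m\<close> show ?thesis using r by (simp add: blk_diag_def vtrunc_def pivot_col_def idm_def mult.assoc)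
  next
    assume "\<not> i < m" "k < m"
    then have "i = m" using ik by simp
    with \<open>k < m\<close> show ?thesis using r by (simp add: blk_diag_def vtrunc_def pivot_row_def idm_def flip: mult.assoc)
  next
    assume "\<not> i < m" "\<not> k < m"
    then have "i = m" "k = m" using ik by auto
    then show ?thesis by (simp add: blk_diag_def vtrunc_def)
  qed
  finally show ?thesis .
qed

lemma pivot_prod_col_transv_left: assumes "ring_unit (Z m m)"
  shows "pivot_prod (Suc m) (blk_mult (Suc m) (col_transv m g) Z) = pivot_prod (Suc m) Z"
proof -
  let ?W = "blk_mult (Suc m) (col_transv m g) Z"
  have Wmm: "?W m m = Z m m" by (simp add: blk_mult_col_transv_left vtrunc_def)
  have r: "Z m m * ring_inv (Z m m) = 1" using ring_inv_r[OF assms] .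
  have "pivot_prod m (schur m ?W) = pivot_prod m (schur m Z)"
  proof (rule pivot_prod_cong)
    fix i k assume ik: "i < m" "k < m"
    have "(Z i m + g i * Z m m) * ring_inv (Z m m) * Z m k = Z i m * ring_inv (Z m m) * Z m k + g i * Z m k"
      by (simp add: distrib_right mult.assoc) (simp flip: mult.assoc add: r)
    then show "schur m ?W i k = schur m Z i k"
      using ik Wmm by (simp add: schur_def blk_mult_col_transv_left vtrunc_def)
  qed
  then show ?thesis by (simp add: Wmm)
qed

lemma pivot_prod_row_transv_right: assumes "ring_unit (Z m m)"
  shows "pivot_prod (Suc m) (blk_mult (Suc m) Z (row_transv m g)) = pivot_prod (Suc m) Z"
proof -
  let ?W = "blk_mult (Suc m) Z (row_transv m g)"
  have Wmm: "?W m m = Z m m" by (simp add: blk_mult_row_transv_right vtrunc_def)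
  have r: "ring_inv (Z m m) * Z m m = 1" using ring_inv_l[OF assms] .
  have "pivot_prod m (schur m ?W) = pivot_prod m (schur m Z)"
  proof (rule pivot_prod_cong)
    fix i k assume ik: "i < m" "k < m"
    have "Z i m * ring_inv (Z m m) * (Z m k + Z m m * g k) = Z i m * ring_inv (Z m m) * Z m k + Z i m * g k"
      by (simp add: distrib_left) (simp add: mult.assoc flip: mult.assoc[of "ring_inv _"] add: r)
    then show "schur m ?W i k = schur m Z i k"
      using ik Wmm by (simp add: schur_def blk_mult_row_transv_right vtrunc_def)
  qed
  then show ?thesis by (simp add: Wmm)
qed

lemma pivot_prod_blk_diag_left: assumes "ring_unit x" "ring_unit (Z m m)"
  shows "pivot_prod (Suc m) (blk_mult (Suc m) (blk_diag m S x) Z) = pivot_prod m (blk_mult m S (schur m Z)) * (x * Z m m)"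
proof -
  let ?W = "blk_mult (Suc m) (blk_diag m S x) Z"
  have Wmm: "?W m m = x * Z m m" by (simp add: blk_mult_blk_diag_left)
  have key: "ring_inv (x * Z m m) * (x * Z m k) = ring_inv (Z m m) * Z m k" for k
    using ring_inv_l[OF assms(1)] by (simp add: ring_inv_mult[OF assms] mult.assoc) (simp flip: mult.assoc)
  have "pivot_prod m (schur m ?W) = pivot_prod m (blk_mult m S (schur m Z))"
  proof (rule pivot_prod_cong)
    fix i k assume ik: "i < m" "k < m"
    have "schur m ?W i k = blk_mult m S Z i k - blk_mult m S Z i m * (ring_inv (x * Z m m) * (x * Z m k))"
      using ik by (simp add: schur_def blk_mult_blk_diag_left Wmm mult.assoc)
    also have "\<dots> = blk_mult m S (schur m Z) i k"
      by (simp add: key blk_mult_def schur_def sum_distrib_right right_diff_distrib sum_subtractf mult.assoc)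
    finally show "schur m ?W i k = blk_mult m S (schur m Z) i k" .
  qed
  then show ?thesis by (simp add: Wmm)
qed

lemma pivot_prod_blk_diag_right: assumes "ring_unit y" "ring_unit (Z m m)"
  shows "pivot_prod (Suc m) (blk_mult (Suc m) Z (blk_diag m S y)) = pivot_prod m (blk_mult m (schur m Z) S) * (Z m m * y)"
proof -
  let ?W = "blk_mult (Suc m) Z (blk_diag m S y)"
  have Wmm: "?W m m = Z m m * y" by (simp add: blk_mult_blk_diag_right)
  have key: "(Z i m * y) * ring_inv (Z m m * y) = Z i m * ring_inv (Z m m)" for i
    using ring_inv_r[OF assms(1)] by (simp add: ring_inv_mult[OF assms(2,1)] mult.assoc) (simp flip: mult.assoc)
  have "pivot_prod m (schur m ?W) = pivot_prod m (blk_mult m (schur m Z) S)"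
  proof (rule pivot_prod_cong)
    fix i k assume ik: "i < m" "k < m"
    have "schur m ?W i k = blk_mult m Z S i k - ((Z i m * y) * ring_inv (Z m m * y)) * blk_mult m Z S m k"
      using ik by (simp add: schur_def blk_mult_blk_diag_right Wmm)
    also have "\<dots> = blk_mult m Z S i k - (Z i m * ring_inv (Z m m)) * blk_mult m Z S m k"
      by (simp only: key)
    also have "\<dots> = blk_mult m (schur m Z) S i k"
      by (simp add: blk_mult_def schur_def sum_distrib_left left_diff_distrib sum_subtractf mult.assoc)
    finally show "schur m ?W i k = blk_mult m (schur m Z) S i k" .
  qed
  then show ?thesis by (simp add: Wmm)
qed

lemma pivot_prod_row_col_transv:
  "pivot_prod (Suc m) (blk_mult (Suc m) (row_transv m r) (col_transv m g)) =
   pivot_prod m (\<lambda>i k. idm i k + g i * (- ring_inv (1 + dot m r g)) * r k) * (1 + dot m r g)"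
proof -
  let ?W = "blk_mult (Suc m) (row_transv m r) (col_transv m g)"
  have W: "\<And>i k. i < Suc m \<Longrightarrow> k < Suc m \<Longrightarrow> ?W i k = col_transv m g i k + unit_vec m i * (\<Sum>l<Suc m. vtrunc m r l * col_transv m g l k)"
    unfolding row_transv_def by (rule blk_mult_transv_left)
  have s: "(\<Sum>l<Suc m. vtrunc m r l * col_transv m g l k) = vtrunc m r k + dot m r g * unit_vec m k" if "k < Suc m" for k
  proof -
    have "(\<Sum>l<Suc m. vtrunc m r l * col_transv m g l k) = (\<Sum>l<m. r l * col_transv m g l k)"
      by (simp add: vtrunc_def)
    also have "\<dots> = (\<Sum>l<m. r l * idm l k) + dot m r g * unit_vec m k"
      unfolding dot_def sum_distrib_right
      by (simp add: col_transv_def transv_def distrib_left sum.distrib mult.assoc) (intro sum.cong, auto simp: vtrunc_def)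
    also have "(\<Sum>l<m. r l * idm l k) = vtrunc m r k"
    proof (cases "k < m")
      case True then show ?thesis by (simp add: sum_idm_right vtrunc_def)
    next
      case False then show ?thesis by (auto simp: idm_def vtrunc_def intro!: sum.neutral)
    qed
    finally show ?thesis .
  qed
  have Wmm: "?W m m = 1 + dot m r g"
    using W[of m m] s[of m] by (simp add: col_transv_def transv_def vtrunc_def unit_vec_def idm_def)
  have "pivot_prod m (schur m ?W) = pivot_prod m (\<lambda>i k. idm i k + g i * (- ring_inv (1 + dot m r g)) * r k)"
  proof (rule pivot_prod_cong)
    fix i k assume ik: "i < m" "k < m"
    have "?W i k = idm i k" "?W i m = g i" "?W m k = r k"
      using W[of i k] s[of k] W[of i m] s[of m] W[of m k] ik
      by (auto simp: col_transv_def transv_def vtrunc_def unit_vec_def idm_def)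
    then show "schur m ?W i k = idm i k + g i * (- ring_inv (1 + dot m r g)) * r k"
      by (simp add: schur_def Wmm)
  qed
  then show ?thesis by (simp add: Wmm)
qed

lemma blk_diag_eq_mult: "blk_diag t S x = mmul (blk_restrict t S) (diag_mat t x)"
proof (intro ext)
  fix i k
  show "blk_diag t S x i k = mmul (blk_restrict t S) (diag_mat t x) i k"
  proof (cases "i < t")
    case True
    have "mmul (blk_restrict t S) (diag_mat t x) i k = blk_mult t (blk_restrict t S) (diag_mat t x) i k"
      using True by (simp only: mmul_in_block[OF in_block_blk_restrict] if_True)
    also have "\<dots> = (\<Sum>l<t. S i l * idm l k)"
      unfolding blk_mult_def by (intro sum.cong) (auto simp: blk_restrict_def diag_mat_def True)
    also have "\<dots> = (if k < t then S i k else 0)"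
    proof (cases "k < t")
      case True then show ?thesis by (simp add: sum_idm_right)
    next
      case False then show ?thesis by (auto simp: idm_def intro!: sum.neutral)
    qed
    finally show ?thesis using True by (auto simp: blk_diag_def idm_def)
  next
    case False
    then show ?thesis by (auto simp: mmul_in_block[OF in_block_blk_restrict] blk_diag_def diag_mat_def)
  qed
qed

lemma pivot_factorization:
  assumes b: "in_block (Suc t) N" and u: "ring_unit (N t t)"
  shows "N = mmul (col_transv t (pivot_col t N))
               (mmul (blk_diag t (schur t N) (N t t)) (row_transv t (pivot_row t N)))"
    (is "N = mmul ?U (mmul ?D ?L)")
proof (rule in_block_eqI[of "Suc t"])
  show "in_block (Suc t) N" by (rule b)
  show "in_block (Suc t) (mmul ?U (mmul ?D ?L))"
    by (intro in_block_mmul in_block_col_transv in_block_blk_diag in_block_row_transv) auto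
  fix i k assume ik: "i < Suc t" "k < Suc t"
  have "mmul ?U (mmul ?D ?L) i k = blk_mult (Suc t) ?U (mmul ?D ?L) i k"
    by (rule mmul_eq_blk_mult[OF in_block_col_transv[OF lessI] ik(1)])
  also have "\<dots> = blk_mult (Suc t) ?U (blk_mult (Suc t) ?D ?L) i k"
    by (rule blk_mult_cong) (auto simp: mmul_eq_blk_mult[OF in_block_blk_diag] ik)
  finally show "N i k = mmul ?U (mmul ?D ?L) i k"
    using blk_mult_pivot_factorization[of N t, OF u ik] by simp
qed

lemma K1class_schur_step:
  assumes b: "in_block (Suc t) N" and u: "ring_unit (N t t)"
    and S: "blk_restrict t (schur t N) \<in> carrier GL_group"
  shows "K1class N = K1class (blk_restrict t (schur t N)) \<otimes>\<^bsub>K1\<^esub> K1class (unit_mat (N t t))"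
proof -
  let ?U = "col_transv t (pivot_col t N)" and ?L = "row_transv t (pivot_row t N)"
    and ?E = "blk_restrict t (schur t N)" and ?D = "diag_mat t (N t t)"
  have UL: "?U \<in> carrier GL_group" "?L \<in> carrier GL_group"
    using col_transv_derived_GL row_transv_derived_GL derived_GL_GL by blast+
  have D: "?D \<in> carrier GL_group" using u by (rule diag_mat_GL)
  have ED: "mmul ?E ?D \<in> carrier GL_group" using S D by (rule GL_mmul_closed)
  have "N = mmul ?U (mmul (mmul ?E ?D) ?L)"
    using pivot_factorization[OF b u] by (simp add: blk_diag_eq_mult)
  then have "K1class N = K1class (mmul ?U (mmul (mmul ?E ?D) ?L))" by (rule arg_cong)
  also have "\<dots> = K1class ?U \<otimes>\<^bsub>K1\<^esub> ((K1class ?E \<otimes>\<^bsub>K1\<^esub> K1class ?D) \<otimes>\<^bsub>K1\<^esub> K1class ?L)"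
    using UL S D ED by (simp add: K1class_mult GL_mmul_closed)
  also have "\<dots> = K1class ?E \<otimes>\<^bsub>K1\<^esub> K1class (unit_mat (N t t))"
    using K1class_derived_GL[OF col_transv_derived_GL[of t "pivot_col t N"]]
      K1class_derived_GL[OF row_transv_derived_GL[of t "pivot_row t N"]]
      K1class_diag_mat[OF u] K1class_carrier[OF S] K1class_carrier[OF D]
    by simp
  finally show ?thesis .
qed

text \<open>The product of the elementary matrices \<open>I + b e\<^sub>1\<^sub>0\<close> and \<open>I + a e\<^sub>0\<^sub>1\<close> is
  \<open>[[1, a], [b, 1 + b a]]\<close>; eliminating its pivot \<open>1 + b a\<close> leaves the Schur complement
  \<open>(1 + a b)\<^sup>-\<^sup>1\<close>.\<close>

lemma K1class_unit_swap:
  assumes u: "ring_unit (1 + b * a)"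
  shows "K1class (unit_mat (1 + a * b)) = K1class (unit_mat (1 + b * a))"
proof -
  let ?N = "mmul (row_transv 1 (\<lambda>_. b)) (col_transv 1 (\<lambda>_. a))"
  have v: "vec_in_block 2 (unit_vec 1)" "vec_in_block 2 (vtrunc 1 (\<lambda>_. b))" "vec_in_block 2 (vtrunc 1 (\<lambda>_. a))"
    by (auto intro: vec_in_block_unit_vec vec_in_block_vtrunc)
  have N: "?N = (\<lambda>i k. idm i k + unit_vec 1 i * vtrunc 1 (\<lambda>_. b) k + vtrunc 1 (\<lambda>_. a) i * unit_vec 1 k
      + unit_vec 1 i * dot 2 (vtrunc 1 (\<lambda>_. b)) (vtrunc 1 (\<lambda>_. a)) * unit_vec 1 k)"
    unfolding row_transv_def col_transv_def by (rule mmul_transv_transv[OF v(1,2,3,1)])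
  have dt: "dot 2 (vtrunc 1 (\<lambda>_. b)) (vtrunc 1 (\<lambda>_. a)) = b * a"
    unfolding dot_def by (simp add: vtrunc_def numeral_2_eq_2)
  have N11: "?N 1 1 = 1 + b * a" unfolding N dt by (simp add: unit_vec_def vtrunc_def idm_def)
  have "schur 1 ?N 0 0 = ring_inv (1 + a * b)"
    unfolding schur_def N dt ring_unit_one_plus_swap(2)[OF u] by (simp add: unit_vec_def vtrunc_def idm_def)
  then have schur: "blk_restrict 1 (schur 1 ?N) = unit_mat (ring_inv (1 + a * b))"
    by (auto simp: blk_restrict_def unit_mat_def fun_eq_iff)
  have "?N \<in> derived_GL"
    using row_transv_derived_GL col_transv_derived_GL derived_GL_subgroup subgroup.m_closed by (metis GL_mult)
  then have "\<one>\<^bsub>K1\<^esub> = K1class ?N" by (simp add: K1class_derived_GL)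
  also have "\<dots> = K1class (unit_mat (ring_inv (1 + a * b))) \<otimes>\<^bsub>K1\<^esub> K1class (unit_mat (1 + b * a))"
    using K1class_schur_step[of 1 ?N] N11 u schur ring_unit_one_plus_swap(1)[OF u]
    by (simp add: in_block_mmul in_block_row_transv in_block_col_transv unit_mat_GL ring_unit_ring_inv)
  also have "\<dots> = inv\<^bsub>K1\<^esub> K1class (unit_mat (1 + a * b)) \<otimes>\<^bsub>K1\<^esub> K1class (unit_mat (1 + b * a))"
    by (simp add: K1class_unit_ring_inv ring_unit_one_plus_swap(1)[OF u])
  finally have "inv\<^bsub>K1\<^esub> K1class (unit_mat (1 + a * b)) \<otimes>\<^bsub>K1\<^esub> K1class (unit_mat (1 + b * a)) = \<one>\<^bsub>K1\<^esub>" ..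
  then show ?thesis
    using u ring_unit_one_plus_swap(1)[OF u] by (simp add: K1G.inv_solve_left' K1class_carrier unit_mat_GL)
qed

section \<open>Matrices under ring homomorphisms\<close>

definition map_mat :: "('b::ring_1 \<Rightarrow> 'a::ring_1) \<Rightarrow> 'b mat \<Rightarrow> 'a mat" where
  "map_mat f M = (\<lambda>i k. f (M i k))"

lemma ring_hom_cls_one: "ring_hom_cls f \<Longrightarrow> f 1 = 1" by (simp add: ring_hom_cls_def)

lemma ring_hom_cls_add: "ring_hom_cls f \<Longrightarrow> f (x + y) = f x + f y" by (simp add: ring_hom_cls_def)

lemma ring_hom_cls_mult: "ring_hom_cls f \<Longrightarrow> f (x * y) = f x * f y" by (simp add: ring_hom_cls_def)

lemma ring_hom_cls_zero: assumes "ring_hom_cls f" shows "f 0 = 0"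
proof -
  have "f 0 = f (0 + 0)" by simp
  also have "\<dots> = f 0 + f 0" by (rule ring_hom_cls_add[OF assms])
  finally show ?thesis by simp
qed

lemma ring_hom_cls_uminus: assumes "ring_hom_cls f" shows "f (- x) = - f x"
proof -
  have "f x + f (- x) = f (x + - x)" by (rule ring_hom_cls_add[OF assms, symmetric])
  also have "\<dots> = 0" by (simp add: ring_hom_cls_zero[OF assms])
  finally show ?thesis by (rule minus_unique[symmetric])
qed

lemma ring_hom_cls_diff: "ring_hom_cls f \<Longrightarrow> f (x - y) = f x - f y"
  using ring_hom_cls_add[of f x "- y"] ring_hom_cls_uminus[of f y] by (metis diff_conv_add_uminus)

lemma ring_hom_cls_sum: assumes "ring_hom_cls f" shows "f (sum g A) = (\<Sum>a\<in>A. f (g a))"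
proof (cases "finite A")
  case True then show ?thesis
    by (induction A rule: finite_induct) (auto simp: ring_hom_cls_zero[OF assms] ring_hom_cls_add[OF assms])
next
  case False then show ?thesis by (simp add: ring_hom_cls_zero[OF assms])
qed

lemma ring_hom_cls_idm: "ring_hom_cls f \<Longrightarrow> f (idm i k) = idm i k"
  using ring_hom_cls_one[of f] ring_hom_cls_zero[of f] by (simp add: idm_def)

lemma map_mat_idm: "ring_hom_cls f \<Longrightarrow> map_mat f idm = idm"
  by (simp add: map_mat_def ring_hom_cls_idm fun_eq_iff)

lemma in_block_map_mat: "ring_hom_cls f \<Longrightarrow> in_block n M \<Longrightarrow> in_block n (map_mat f M)"
  by (simp add: in_block_def map_mat_def ring_hom_cls_idm)

lemma map_mat_blk_mult: assumes f: "ring_hom_cls f" shows "map_mat f (blk_mult n M N) = blk_mult n (map_mat f M) (map_mat f N)"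
  by (simp add: map_mat_def blk_mult_def ring_hom_cls_sum[OF f] ring_hom_cls_mult[OF f] fun_eq_iff)

lemma map_mat_mmul: assumes f: "ring_hom_cls f" and b: "in_block n M" "in_block n N"
  shows "map_mat f (mmul M N) = mmul (map_mat f M) (map_mat f N)"
proof (rule in_block_eqI[of n])
  show "in_block n (map_mat f (mmul M N))" using b f by (intro in_block_map_mat in_block_mmul)
  show "in_block n (mmul (map_mat f M) (map_mat f N))" using b f by (intro in_block_map_mat in_block_mmul)
  fix i k assume "i < n" "k < n"
  then show "map_mat f (mmul M N) i k = mmul (map_mat f M) (map_mat f N) i k"
    by (simp only: mmul_eq_blk_mult[OF b(1)] mmul_eq_blk_mult[OF in_block_map_mat[OF f b(1)]] map_mat_def[of f "mmul M N"]
       flip: map_mat_blk_mult[OF f]) (simp add: map_mat_def)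
qed

lemma map_mat_mmul_fin: assumes f: "ring_hom_cls f" and b: "fin_mat M" "fin_mat N"
  shows "map_mat f (mmul M N) = mmul (map_mat f M) (map_mat f N)"
  using b by (rule common_block) (rule map_mat_mmul[OF f])

lemma fin_mat_map_mat: "ring_hom_cls f \<Longrightarrow> fin_mat M \<Longrightarrow> fin_mat (map_mat f M)"
  unfolding fin_mat_in_block by (metis in_block_map_mat)

lemma map_mat_GL: assumes f: "ring_hom_cls f" and M: "M \<in> carrier GL_group"
  shows "map_mat f M \<in> carrier GL_group"
proof -
  obtain N where N: "fin_mat M" "fin_mat N" "mmul M N = idm" "mmul N M = idm" using M by (rule GL_memE)
  then have "mmul (map_mat f M) (map_mat f N) = idm" "mmul (map_mat f N) (map_mat f M) = idm"
    by (simp_all flip: map_mat_mmul_fin[OF f] add: map_mat_idm[OF f])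
  then show ?thesis using N fin_mat_map_mat[OF f] by (intro GL_memI) auto
qed

lemma map_mat_mult_GL: "ring_hom_cls f \<Longrightarrow> x \<in> carrier GL_group \<Longrightarrow> y \<in> carrier GL_group \<Longrightarrow>
   map_mat f (mmul x y) = mmul (map_mat f x) (map_mat f y)"
  by (simp add: map_mat_mmul_fin GL_fin_mat)

lemma map_mat_hom:
  fixes f :: "'a::ring_1 \<Rightarrow> 'b::ring_1"
  assumes f: "ring_hom_cls f"
  shows "map_mat f \<in> hom GL_group GL_group"
proof (rule homI)
  fix x :: "'a mat" assume "x \<in> carrier GL_group"
  then show "map_mat f x \<in> carrier GL_group" by (rule map_mat_GL[OF f])
next
  fix x y :: "'a mat" assume "x \<in> carrier GL_group" "y \<in> carrier GL_group"
  then show "map_mat f (x \<otimes>\<^bsub>GL_group\<^esub> y) = map_mat f x \<otimes>\<^bsub>GL_group\<^esub> map_mat f y"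
    by (simp add: GL_mult map_mat_mult_GL[OF f])
qed

lemma map_mat_group_hom: "ring_hom_cls f \<Longrightarrow> group_hom GL_group GL_group (map_mat f)"
  by (simp add: group_hom_def group_hom_axioms_def map_mat_hom GL_group_is_group)

lemma map_mat_GL_inv: assumes f: "ring_hom_cls f" and M: "M \<in> carrier GL_group"
  shows "map_mat f (GL_inv M) = GL_inv (map_mat f M)"
proof -
  interpret h: group_hom GL_group GL_group "map_mat f" by (rule map_mat_group_hom[OF f])
  show ?thesis unfolding GL_inv_def by (rule h.hom_inv[OF M])
qed

lemma map_mat_comp: "map_mat f (map_mat g M) = map_mat (\<lambda>x. f (g x)) M"
  by (simp add: map_mat_def)

lemma map_mat_derived_GL: assumes f: "ring_hom_cls f" and d: "d \<in> derived_GL" shows "map_mat f d \<in> derived_GL"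
proof -
  interpret h: group_hom GL_group GL_group "map_mat f" by (rule map_mat_group_hom[OF f])
  have "map_mat f ` derived_GL = derived GL_group (map_mat f ` carrier GL_group)"
    by (rule h.derived_img[symmetric, OF subset_refl])
  also have "\<dots> \<subseteq> derived_GL" by (rule GLG.mono_derived) (use map_mat_GL[OF f] in auto)
  finally show ?thesis using d by auto
qed

lemma map_mat_unit_mat: "ring_hom_cls f \<Longrightarrow> map_mat f (unit_mat u) = unit_mat (f u)"
  by (auto simp: map_mat_def unit_mat_def ring_hom_cls_idm fun_eq_iff)

lemma K1map_class:
  assumes f: "ring_hom_cls f" and X: "X \<in> carrier GL_group"
  shows "K1map f (K1class X) = K1class (map_mat f X)"
proof -
  have hom: "K1class \<circ> map_mat f \<in> hom GL_group K1"
    using map_mat_hom[OF f] K1class_hom by (rule hom_compose)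
  have triv: "(K1class \<circ> map_mat f) d = \<one>\<^bsub>K1\<^esub>" if "d \<in> derived_GL" for d
    using that by (simp add: K1class_derived_GL map_mat_derived_GL[OF f])
  have "the_elem ((K1class \<circ> map_mat f) ` K1class X) = K1class (map_mat f X)"
    unfolding K1class_def[of X]
    using GLG.the_elem_hom_image_rcos[OF derived_GL_subgroup X hom K1G.is_group triv] by simp
  then show ?thesis by (simp add: K1map_def map_mat_def comp_def)
qed

lemma K1map_hom: fixes f :: "'a::ring_1 \<Rightarrow> 'b::ring_1"
  assumes f: "ring_hom_cls f" shows "K1map f \<in> hom (K1 :: 'a mat set monoid) K1"
proof (rule homI)
  fix x :: "'a mat set" assume "x \<in> carrier K1"
  then obtain X where X: "X \<in> carrier GL_group" "x = K1class X" by (auto simp: K1_carrier)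
  then show "K1map f x \<in> carrier K1" by (simp add: K1map_class[OF f] K1class_carrier map_mat_GL[OF f])
next
  fix x y :: "'a mat set" assume "x \<in> carrier K1" "y \<in> carrier K1"
  then obtain X Y where X: "X \<in> carrier GL_group" "x = K1class X" and Y: "Y \<in> carrier GL_group" "y = K1class Y"
    by (auto simp: K1_carrier)
  have "x \<otimes>\<^bsub>K1\<^esub> y = K1class (mmul X Y)" using X Y by (simp add: K1class_mult)
  moreover have "mmul X Y \<in> carrier GL_group" using X Y GLG.m_closed by (simp add: GL_mult)
  ultimately show "K1map f (x \<otimes>\<^bsub>K1\<^esub> y) = K1map f x \<otimes>\<^bsub>K1\<^esub> K1map f y"
    using X Y hom_mult[OF map_mat_hom[OF f] X(1) Y(1)]
    by (simp add: K1map_class[OF f] K1class_mult map_mat_GL[OF f] GL_mult flip: K1class_mult)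
qed

section \<open>The local augmentation and the group \<open>\<epsilon>\<^sup>-\<^sup>1(1)/C\<close>\<close>

locale local_aug =
  fixes eps :: "'b::ring_1 \<Rightarrow> 'a::ring_1" and j :: "'a \<Rightarrow> 'b"
  assumes la: "local_augmentation eps j"
begin

lemma eps_ring_hom_cls: "ring_hom_cls eps" using la by (simp add: local_augmentation_def)

lemma j_ring_hom_cls: "ring_hom_cls j" using la by (simp add: local_augmentation_def)

lemma eps_j: "eps (j x) = x" using la by (simp add: local_augmentation_def)

lemma eps_local: "sq_invertible n (\<lambda>i k. eps (\<alpha> i k)) \<Longrightarrow> sq_invertible n \<alpha>"
  using la by (simp add: local_augmentation_def local_hom_def)

lemmas eps_simps[simp] =
  ring_hom_cls_one[OF eps_ring_hom_cls] ring_hom_cls_add[OF eps_ring_hom_cls]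
  ring_hom_cls_mult[OF eps_ring_hom_cls] ring_hom_cls_zero[OF eps_ring_hom_cls]
  ring_hom_cls_uminus[OF eps_ring_hom_cls] ring_hom_cls_diff[OF eps_ring_hom_cls]
  ring_hom_cls_sum[OF eps_ring_hom_cls] ring_hom_cls_idm[OF eps_ring_hom_cls]

definition E1 :: "'b set" where "E1 = {u. eps u = 1}"

lemma E1_iff[simp]: "u \<in> E1 \<longleftrightarrow> eps u = 1" by (simp add: E1_def)

lemma E1_unit: assumes "eps x = 1" shows "ring_unit x"
proof -
  have "sq_invertible 1 (\<lambda>i k. eps ((\<lambda>i k. x) i k))"
    unfolding sq_invertible_def using assms by (intro exI[of _ "\<lambda>i k. 1"]) simp
  then have "sq_invertible 1 (\<lambda>i k. x)" by (rule eps_local)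
  then obtain \<beta> where "x * \<beta> 0 0 = 1" "\<beta> 0 0 * x = 1" unfolding sq_invertible_def by auto
  then show ?thesis unfolding ring_unit_def by blast
qed

lemma eps_ring_inv: "eps x = 1 \<Longrightarrow> eps (ring_inv x) = 1"
  using ring_inv_r[OF E1_unit, of x] by (metis eps_simps(1,3) mult_1_left)

lemma GL_if_eps_idm:
  assumes b: "in_block n M" and e: "\<And>i k. eps (M i k) = idm i k"
  shows "M \<in> carrier GL_group"
proof (rule sq_invertible_GL[OF b eps_local])
  show "sq_invertible n (\<lambda>i k. eps (M i k))"
    unfolding sq_invertible_def e by (intro exI[of _ idm]) (simp add: sum_idm_left, simp add: idm_def)
qed

abbreviation UG :: "'b monoid" where "UG \<equiv> units_grp"

definition E1_grp :: "'b monoid" where "E1_grp = UG\<lparr>carrier := E1\<rparr>"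

definition C_gens :: "'b set" where
  "C_gens = {(1 + a * b) * inv\<^bsub>UG\<^esub> (1 + b * a) | a b. eps (a * b) = 0 \<and> eps (b * a) = 0}"

definition C :: "'b set" where "C = generate UG C_gens"

definition Q :: "'b set monoid" where "Q = E1_grp Mod C"

definition qcls :: "'b \<Rightarrow> 'b set" where "qcls u = C #>\<^bsub>E1_grp\<^esub> u"

lemma E1_sub: "subgroup E1 UG"
proof (rule UGg.subgroupI)
  show "E1 \<subseteq> carrier UG" by (auto simp: units_grp_carrier E1_unit)
  have "1 \<in> E1" by simp
  then show "E1 \<noteq> {}" by (metis empty_iff)
  fix a assume "a \<in> E1"
  then show "inv\<^bsub>UG\<^esub> a \<in> E1" by (simp add: units_grp_inv E1_unit eps_ring_inv)
next
  fix a b assume "a \<in> E1" "b \<in> E1"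
  then show "a \<otimes>\<^bsub>UG\<^esub> b \<in> E1" by (simp add: units_grp_mult)
qed

lemma E1_grp_group: "group E1_grp"
  unfolding E1_grp_def by (rule UGg.subgroup_imp_group[OF E1_sub])

lemma E1_grp_simps: "carrier E1_grp = E1" "x \<otimes>\<^bsub>E1_grp\<^esub> y = x * y" "\<one>\<^bsub>E1_grp\<^esub> = 1"
  by (simp_all add: E1_grp_def units_grp_mult units_grp_one)

lemma E1_grp_inv: assumes "u \<in> E1" shows "inv\<^bsub>E1_grp\<^esub> u = ring_inv u"
proof -
  have "inv\<^bsub>E1_grp\<^esub> u = inv\<^bsub>UG\<^esub> u" unfolding E1_grp_def by (rule UGg.m_inv_consistent[OF E1_sub assms])
  also have "\<dots> = ring_inv u" by (rule units_grp_inv[OF E1_unit]) (use assms in simp)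
  finally show ?thesis .
qed

lemma C_gens_E1: "C_gens \<subseteq> E1"
proof
  fix g assume "g \<in> C_gens"
  then obtain a b where ab: "g = (1 + a * b) * inv\<^bsub>UG\<^esub> (1 + b * a)" "eps (a * b) = 0" "eps (b * a) = 0"
    by (auto simp: C_gens_def)
  have "eps (1 + b * a) = 1" using ab by simp
  then show "g \<in> E1" using ab by (simp add: units_grp_inv E1_unit eps_ring_inv)
qed

lemma C_sub_UG: "subgroup C UG"
  unfolding C_def using C_gens_E1 E1_sub subgroup.subset by (intro UGg.generate_is_subgroup) blast

lemma C_E1: "C \<subseteq> E1"
  unfolding C_def by (rule UGg.generate_subgroup_incl[OF C_gens_E1 E1_sub])

lemma C_sub: "subgroup C E1_grp"
  unfolding E1_grp_def by (rule UGg.subgroup_incl[OF C_sub_UG E1_sub C_E1])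

lemma C_gens_C: "C_gens \<subseteq> C" unfolding C_def by (rule generate.incl[of _ C_gens UG, THEN subsetI])

text \<open>With \<open>b = v - u\<^sup>-\<^sup>1\<close> one has \<open>1 + u b = u v\<close> and \<open>1 + b u = v u\<close>.\<close>

lemma comm_C_gens: assumes "u \<in> E1" "v \<in> E1" shows "u * v * ring_inv u * ring_inv v \<in> C_gens"
proof -
  have uu: "ring_unit u" "ring_unit v" using assms E1_unit by auto
  define b where "b = v - ring_inv u"
  have ab: "u * b = u * v - 1" "b * u = v * u - 1"
    using ring_inv_r[OF uu(1)] ring_inv_l[OF uu(1)] by (simp_all add: b_def algebra_simps)
  have "(1 + u * b) * inv\<^bsub>UG\<^esub> (1 + b * u) = u * v * ring_inv (v * u)"
    using ab ring_unit_mult[OF uu(2,1)] by (simp add: units_grp_inv)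
  also have "\<dots> = u * v * ring_inv u * ring_inv v" by (simp add: ring_inv_mult[OF uu(2,1)] mult.assoc)
  finally have "(1 + u * b) * inv\<^bsub>UG\<^esub> (1 + b * u) = u * v * ring_inv u * ring_inv v" .
  moreover have "eps (u * b) = 0" "eps (b * u) = 0" using ab assms by simp_all
  ultimately show ?thesis unfolding C_gens_def by (intro CollectI exI[of _ u] exI[of _ b]) simp
qed

lemma C_normal: "C \<lhd> E1_grp"
proof (rule group.normal_invI[OF E1_grp_group C_sub])
  fix x h assume x: "x \<in> carrier E1_grp" and h: "h \<in> C"
  have xE: "x \<in> E1" and hE: "h \<in> E1" using x h C_E1 by (auto simp: E1_grp_simps)
  have "x * h * ring_inv x * ring_inv h \<in> C" using comm_C_gens[OF xE hE] C_gens_C by blast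
  then have "x * h * ring_inv x * ring_inv h * h \<in> C"
    using subgroup.m_closed[OF C_sub_UG _ h] by (simp add: units_grp_mult)
  moreover have "x * h * ring_inv x * ring_inv h * h = x * h * ring_inv x"
    using ring_inv_l[OF E1_unit, of h] hE by (simp add: mult.assoc)
  ultimately show "x \<otimes>\<^bsub>E1_grp\<^esub> h \<otimes>\<^bsub>E1_grp\<^esub> inv\<^bsub>E1_grp\<^esub> x \<in> C"
    using xE by (simp add: E1_grp_simps E1_grp_inv)
qed

interpretation CN: normal C E1_grp by (rule C_normal)

lemma Q_group: "group Q" unfolding Q_def by (rule CN.factorgroup_is_group)

lemma qcls_hom: "qcls \<in> hom E1_grp Q"
  unfolding qcls_def[abs_def] Q_def by (rule CN.r_coset_hom_Mod)

lemma qcls_carrier: "u \<in> E1 \<Longrightarrow> qcls u \<in> carrier Q"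
  using hom_in_carrier[OF qcls_hom] by (simp add: E1_grp_simps)

lemma qcls_mult: "u \<in> E1 \<Longrightarrow> v \<in> E1 \<Longrightarrow> qcls (u * v) = qcls u \<otimes>\<^bsub>Q\<^esub> qcls v"
  using hom_mult[OF qcls_hom] by (simp add: E1_grp_simps)

lemma Q_carrier: "carrier Q = qcls ` E1"
  by (simp add: Q_def qcls_def[abs_def] carrier_FactGroup E1_grp_simps)

lemma Q_one: "\<one>\<^bsub>Q\<^esub> = C" by (simp add: Q_def)

lemma qcls_C: "c \<in> C \<Longrightarrow> qcls c = \<one>\<^bsub>Q\<^esub>"
  unfolding qcls_def Q_one by (rule subgroup.rcos_const[OF C_sub E1_grp_group])

lemma qcls_one: "qcls 1 = \<one>\<^bsub>Q\<^esub>"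
  using qcls_C subgroup.one_closed[OF C_sub] by (simp add: E1_grp_simps)

lemma Q_comm: "comm_group Q"
proof (rule group.group_comm_groupI[OF Q_group])
  fix X Y assume "X \<in> carrier Q" "Y \<in> carrier Q"
  then obtain u v where uv: "u \<in> E1" "v \<in> E1" "X = qcls u" "Y = qcls v" by (auto simp: Q_carrier)
  have uu: "ring_unit u" "ring_unit v" using uv E1_unit by auto
  have uvE: "u * v \<in> E1" "v * u \<in> E1" using uv by auto
  have "u * v * ring_inv (v * u) \<in> C"
    using comm_C_gens[OF uv(1,2)] C_gens_C by (auto simp: ring_inv_mult[OF uu(2,1)] mult.assoc)
  then have "u * v \<in> C #>\<^bsub>E1_grp\<^esub> (v * u)"
    using subgroup.rcos_module_rev[OF C_sub E1_grp_group] uvE by (simp add: E1_grp_simps E1_grp_inv)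
  then have "C #>\<^bsub>E1_grp\<^esub> (v * u) = C #>\<^bsub>E1_grp\<^esub> (u * v)"
    using group.repr_independence[OF E1_grp_group _ _ C_sub] uvE by (simp add: E1_grp_simps)
  then have "qcls (u * v) = qcls (v * u)" by (simp add: qcls_def)
  moreover have "X \<otimes>\<^bsub>Q\<^esub> Y = qcls (u * v)" "Y \<otimes>\<^bsub>Q\<^esub> X = qcls (v * u)"
    using uv qcls_mult by simp_all
  ultimately show "X \<otimes>\<^bsub>Q\<^esub> Y = Y \<otimes>\<^bsub>Q\<^esub> X" by simp
qed

interpretation QG: comm_group Q by (rule Q_comm)

lemma qcls_swap: assumes "eps (a * b) = 0" "eps (b * a) = 0"
  shows "qcls (1 + a * b) = qcls (1 + b * a)"
proof -
  let ?x = "1 + a * b" and ?y = "1 + b * a"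
  have xy: "?x \<in> E1" "?y \<in> E1" using assms by simp_all
  have g: "?x * ring_inv ?y \<in> C"
    using C_gens_C assms xy unfolding C_gens_def by (force simp: units_grp_inv E1_unit)
  have gE: "?x * ring_inv ?y \<in> E1" using xy eps_ring_inv by simp
  have "qcls ?x = qcls (?x * ring_inv ?y * ?y)"
    using ring_inv_l[OF E1_unit, of ?y] xy by (simp add: mult.assoc)
  also have "\<dots> = qcls ?y" using qcls_mult[OF gE xy(2)] qcls_C[OF g] qcls_carrier[OF xy(2)] by simp
  finally show ?thesis .
qed

lemma qcls_ring_inv: "u \<in> E1 \<Longrightarrow> qcls (ring_inv u) \<otimes>\<^bsub>Q\<^esub> qcls u = \<one>\<^bsub>Q\<^esub>"
  using qcls_mult[of "ring_inv u" u] ring_inv_l[OF E1_unit, of u] eps_ring_inv qcls_one by simp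

section \<open>Pivot products modulo \<open>C\<close>\<close>

definition reduces_to_id :: "nat \<Rightarrow> 'b mat \<Rightarrow> bool" where
  "reduces_to_id n X \<longleftrightarrow> (\<forall>i<n. \<forall>k<n. eps (X i k) = idm i k)"

lemma reduces_to_id_blk_mult:
  "reduces_to_id n X \<Longrightarrow> reduces_to_id n Y \<Longrightarrow> reduces_to_id n (blk_mult n X Y)"
  unfolding reduces_to_id_def by (simp add: blk_mult_def sum_idm_left)

lemma reduces_to_id_schur: "reduces_to_id (Suc m) X \<Longrightarrow> reduces_to_id m (schur m X)"
  unfolding reduces_to_id_def by (simp add: schur_def idm_def)

lemma reduces_to_id_E1: "reduces_to_id (Suc m) X \<Longrightarrow> X m m \<in> E1"
  unfolding reduces_to_id_def by (simp add: idm_def)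

lemma reduces_to_id_unit: "reduces_to_id (Suc m) X \<Longrightarrow> ring_unit (X m m)"
  using reduces_to_id_E1 E1_unit by simp

lemma reduces_to_id_pivot_prod: "reduces_to_id n X \<Longrightarrow> pivot_prod n X \<in> E1"
proof (induction n arbitrary: X)
  case 0 then show ?case by simp
next
  case (Suc n)
  then show ?case using reduces_to_id_schur[OF Suc.prems] reduces_to_id_E1[OF Suc.prems] by simp
qed

lemma reduces_to_id_col_transv:
  "(\<And>i. i < m \<Longrightarrow> eps (g i) = 0) \<Longrightarrow> reduces_to_id (Suc m) (col_transv m g)"
  unfolding reduces_to_id_def col_transv_def by (simp add: transv_def vtrunc_def)

lemma reduces_to_id_row_transv:
  "(\<And>i. i < m \<Longrightarrow> eps (g i) = 0) \<Longrightarrow> reduces_to_id (Suc m) (row_transv m g)"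
  unfolding reduces_to_id_def row_transv_def by (simp add: transv_def vtrunc_def)

lemma reduces_to_id_blk_diag:
  "reduces_to_id m S \<Longrightarrow> eps x = 1 \<Longrightarrow> reduces_to_id (Suc m) (blk_diag m S x)"
  unfolding reduces_to_id_def blk_diag_def by (auto simp: idm_def less_Suc_eq)

lemma reduces_to_id_pivot_col: "reduces_to_id (Suc m) X \<Longrightarrow> i < m \<Longrightarrow> eps (pivot_col m X i) = 0"
  unfolding reduces_to_id_def pivot_col_def by (simp add: idm_def)

lemma reduces_to_id_pivot_row: "reduces_to_id (Suc m) X \<Longrightarrow> i < m \<Longrightarrow> eps (pivot_row m X i) = 0"
  unfolding reduces_to_id_def pivot_row_def by (simp add: idm_def)

lemma reduces_to_id_rank_one:
  "(\<forall>k<n. eps (u k) = 0) \<or> (\<forall>k<n. eps (w k) = 0) \<Longrightarrow>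
   reduces_to_id n (\<lambda>i k. idm i k + u i * c * w k)"
  unfolding reduces_to_id_def by auto

lemma qcls_pivot_prod_Suc:
  assumes "reduces_to_id (Suc m) X"
  shows "qcls (pivot_prod (Suc m) X) = qcls (pivot_prod m (schur m X)) \<otimes>\<^bsub>Q\<^esub> qcls (X m m)"
  using qcls_mult[OF reduces_to_id_pivot_prod[OF reduces_to_id_schur[OF assms]] reduces_to_id_E1[OF assms]]
  by simp

text \<open>Eliminating the last pivot \<open>x = 1 + u\<^sub>n c w\<^sub>n\<close> of \<open>I + u c w\<^sup>T\<close> leaves \<open>I + u c' w\<^sup>T\<close> on the
  smaller block, with \<open>c' = c - c w\<^sub>n x\<^sup>-\<^sup>1 u\<^sub>n c\<close>; modulo \<open>C\<close> the pivot may be replaced by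
  \<open>1 + c w\<^sub>n u\<^sub>n\<close>, and \<open>(1 + c w\<^sub>n u\<^sub>n) c' = c\<close>.\<close>

lemma pivot_prod_rank_one:
  assumes "(\<forall>k<n. eps (u k) = 0) \<or> (\<forall>k<n. eps (w k) = 0)"
  shows "qcls (pivot_prod n (\<lambda>i k. idm i k + u i * c * w k)) = qcls (1 + c * (\<Sum>k<n. w k * u k))"
  using assms
proof (induction n arbitrary: c)
  case 0 then show ?case by simp
next
  case (Suc n)
  let ?x = "1 + u n * c * w n" and ?y = "1 + c * w n * u n" and ?s = "\<Sum>k<n. w k * u k"
  define c' where "c' = c - c * w n * ring_inv ?x * u n * c"
  have hyp: "(\<forall>k<n. eps (u k) = 0) \<or> (\<forall>k<n. eps (w k) = 0)" using Suc.prems by auto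
  have E: "?x \<in> E1" "?y \<in> E1" "1 + c' * ?s \<in> E1" using Suc.prems by auto
  have "pivot_prod n (schur n (\<lambda>i k. idm i k + u i * c * w k))
      = pivot_prod n (\<lambda>i k. idm i k + u i * c' * w k)"
    by (rule pivot_prod_cong) (simp add: schur_def idm_def c'_def algebra_simps)
  then have "pivot_prod (Suc n) (\<lambda>i k. idm i k + u i * c * w k)
      = pivot_prod n (\<lambda>i k. idm i k + u i * c' * w k) * ?x"
    by (simp add: idm_def)
  then have "qcls (pivot_prod (Suc n) (\<lambda>i k. idm i k + u i * c * w k))
      = qcls (pivot_prod n (\<lambda>i k. idm i k + u i * c' * w k)) \<otimes>\<^bsub>Q\<^esub> qcls ?x"
    using qcls_mult reduces_to_id_pivot_prod[OF reduces_to_id_rank_one[OF hyp]] E(1) by simp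
  also have "\<dots> = qcls (1 + c' * ?s) \<otimes>\<^bsub>Q\<^esub> qcls ?y"
    using Suc.IH[OF hyp] qcls_swap[of "u n" "c * w n"] Suc.prems by (auto simp: mult.assoc)
  also have "\<dots> = qcls (?y * (1 + c' * ?s))"
    using qcls_mult E qcls_carrier by (simp add: QG.m_comm)
  also have "?y * (1 + c' * ?s) = 1 + c * (\<Sum>k<Suc n. w k * u k)"
  proof -
    have "?y * c' = c"
      using ring_inv_push_through[of "u n" "c * w n" c] E1_unit E(1) by (simp add: c'_def mult.assoc)
    then have "?y + ?y * c' * ?s = 1 + c * (\<Sum>k<Suc n. w k * u k)" by (simp add: algebra_simps)
    then show ?thesis by (simp add: distrib_left mult.assoc)
  qed
  finally show ?case .
qed

lemma qcls_pivot_prod_row_col_transv: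
  assumes g: "\<And>i. i < m \<Longrightarrow> eps (g i) = 0"
  shows "qcls (pivot_prod (Suc m) (blk_mult (Suc m) (row_transv m r) (col_transv m g))) = \<one>\<^bsub>Q\<^esub>"
proof -
  let ?q = "1 + dot m r g"
  have qE: "?q \<in> E1" using g by (simp add: dot_def)
  have red: "reduces_to_id m (\<lambda>i k. idm i k + g i * (- ring_inv ?q) * r k)"
    using g by (intro reduces_to_id_rank_one) auto
  have "qcls (pivot_prod m (\<lambda>i k. idm i k + g i * (- ring_inv ?q) * r k))
      = qcls (1 + - ring_inv ?q * (\<Sum>k<m. r k * g k))"
    by (rule pivot_prod_rank_one) (use g in auto)
  also have "1 + - ring_inv ?q * (\<Sum>k<m. r k * g k) = ring_inv ?q"
  proof -
    have "ring_inv ?q * ?q = 1" by (rule ring_inv_l[OF E1_unit]) (use qE in simp)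
    then show ?thesis by (simp add: dot_def algebra_simps)
  qed
  finally have "qcls (pivot_prod m (\<lambda>i k. idm i k + g i * (- ring_inv ?q) * r k)) = qcls (ring_inv ?q)" .
  then show ?thesis
    unfolding pivot_prod_row_col_transv
    using qcls_mult[OF reduces_to_id_pivot_prod[OF red] qE] qcls_ring_inv[OF qE] by simp
qed

lemma qcls_pivot_prod_blk_diag_left:
  assumes IH: "qcls (pivot_prod m (blk_mult m S (schur m T)))
      = qcls (pivot_prod m S) \<otimes>\<^bsub>Q\<^esub> qcls (pivot_prod m (schur m T))"
    and S: "reduces_to_id m S" and x: "eps x = 1" and T: "reduces_to_id (Suc m) T"
  shows "qcls (pivot_prod (Suc m) (blk_mult (Suc m) (blk_diag m S x) T))
      = qcls (pivot_prod m S) \<otimes>\<^bsub>Q\<^esub> qcls x \<otimes>\<^bsub>Q\<^esub> qcls (pivot_prod (Suc m) T)"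
proof -
  have "pivot_prod (Suc m) (blk_mult (Suc m) (blk_diag m S x) T)
      = pivot_prod m (blk_mult m S (schur m T)) * (x * T m m)"
    using x T by (intro pivot_prod_blk_diag_left) (simp_all add: E1_unit reduces_to_id_unit)
  moreover note E = reduces_to_id_pivot_prod[OF S] reduces_to_id_pivot_prod[OF reduces_to_id_schur[OF T]]
    reduces_to_id_E1[OF T] reduces_to_id_pivot_prod[OF reduces_to_id_blk_mult[OF S reduces_to_id_schur[OF T]]]
  ultimately show ?thesis
    using IH qcls_pivot_prod_Suc[OF T] x qcls_carrier[OF E(1)] qcls_carrier[OF E(2)]
      qcls_carrier[OF E(3)] qcls_carrier[of x] E
    by (simp add: qcls_mult QG.m_ac)
qed

lemma qcls_pivot_prod_blk_diag_right:
  assumes IH: "qcls (pivot_prod m (blk_mult m (schur m V) S))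
      = qcls (pivot_prod m (schur m V)) \<otimes>\<^bsub>Q\<^esub> qcls (pivot_prod m S)"
    and S: "reduces_to_id m S" and y: "eps y = 1" and V: "reduces_to_id (Suc m) V"
  shows "qcls (pivot_prod (Suc m) (blk_mult (Suc m) V (blk_diag m S y)))
      = qcls (pivot_prod (Suc m) V) \<otimes>\<^bsub>Q\<^esub> qcls (pivot_prod m S) \<otimes>\<^bsub>Q\<^esub> qcls y"
proof -
  have "pivot_prod (Suc m) (blk_mult (Suc m) V (blk_diag m S y))
      = pivot_prod m (blk_mult m (schur m V) S) * (V m m * y)"
    using y V by (intro pivot_prod_blk_diag_right) (simp_all add: E1_unit reduces_to_id_unit)
  moreover note E = reduces_to_id_pivot_prod[OF S] reduces_to_id_pivot_prod[OF reduces_to_id_schur[OF V]]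
    reduces_to_id_E1[OF V] reduces_to_id_pivot_prod[OF reduces_to_id_blk_mult[OF reduces_to_id_schur[OF V] S]]
  ultimately show ?thesis
    using IH qcls_pivot_prod_Suc[OF V] y qcls_carrier[OF E(1)] qcls_carrier[OF E(2)]
      qcls_carrier[OF E(3)] qcls_carrier[of y] E
    by (simp add: qcls_mult QG.m_ac)
qed

text \<open>Factor \<open>X = U\<^sub>X D\<^sub>X L\<^sub>X\<close> and \<open>Y = U\<^sub>Y D\<^sub>Y L\<^sub>Y\<close> by the last pivot.  The outer elementary factors
  do not change the pivots, the middle one \<open>L\<^sub>X U\<^sub>Y\<close> contributes a trivial class, and the
  block diagonal factors are handled by induction.\<close>

lemma pivot_prod_mult:
  "reduces_to_id n X \<Longrightarrow> reduces_to_id n Y \<Longrightarrow>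
   qcls (pivot_prod n (blk_mult n X Y)) = qcls (pivot_prod n X) \<otimes>\<^bsub>Q\<^esub> qcls (pivot_prod n Y)"
proof (induction n arbitrary: X Y)
  case 0 then show ?case using qcls_one by simp
next
  case (Suc m)
  let ?n = "Suc m"
  let ?SX = "schur m X" and ?SY = "schur m Y"
  let ?UX = "col_transv m (pivot_col m X)" and ?DX = "blk_diag m ?SX (X m m)"
    and ?LX = "row_transv m (pivot_row m X)"
  let ?UY = "col_transv m (pivot_col m Y)" and ?DY = "blk_diag m ?SY (Y m m)"
    and ?LY = "row_transv m (pivot_row m Y)"
  define V where "V = blk_mult ?n ?LX ?UY"
  define T where "T = blk_mult ?n (blk_mult ?n V ?DY) ?LY"
  have X: "reduces_to_id ?n X" and Y: "reduces_to_id ?n Y" by fact+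
  note E = reduces_to_id_E1[OF X] reduces_to_id_E1[OF Y]
  note S = reduces_to_id_schur[OF X] reduces_to_id_schur[OF Y]
  have UL: "reduces_to_id ?n ?UX" "reduces_to_id ?n ?UY" "reduces_to_id ?n ?LX" "reduces_to_id ?n ?LY"
    using X Y by (simp_all add: reduces_to_id_col_transv reduces_to_id_row_transv
        reduces_to_id_pivot_col reduces_to_id_pivot_row)
  have D: "reduces_to_id ?n ?DX" "reduces_to_id ?n ?DY"
    using S E by (simp_all add: reduces_to_id_blk_diag)
  have V: "reduces_to_id ?n V" and T: "reduces_to_id ?n T"
    using UL D by (simp_all add: V_def T_def reduces_to_id_blk_mult)
  have "pivot_prod ?n (blk_mult ?n X Y)
      = pivot_prod ?n (blk_mult ?n (blk_mult ?n ?UX (blk_mult ?n ?DX ?LX)) (blk_mult ?n ?UY (blk_mult ?n ?DY ?LY)))"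
    using reduces_to_id_unit[OF X] reduces_to_id_unit[OF Y]
    by (intro pivot_prod_cong blk_mult_cong) (simp_all add: blk_mult_pivot_factorization)
  also have "\<dots> = pivot_prod ?n (blk_mult ?n ?UX (blk_mult ?n ?DX T))"
    by (simp only: T_def V_def blk_mult_assoc)
  also have "\<dots> = pivot_prod ?n (blk_mult ?n ?DX T)"
    using D T by (intro pivot_prod_col_transv_left reduces_to_id_unit reduces_to_id_blk_mult)
  finally have "qcls (pivot_prod ?n (blk_mult ?n X Y))
      = qcls (pivot_prod m ?SX) \<otimes>\<^bsub>Q\<^esub> qcls (X m m) \<otimes>\<^bsub>Q\<^esub> qcls (pivot_prod ?n T)"
    using qcls_pivot_prod_blk_diag_left[OF Suc.IH S(1) _ T] E S T
    by (simp add: reduces_to_id_blk_mult reduces_to_id_schur)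
  also have "qcls (pivot_prod ?n T) = qcls (pivot_prod ?n V) \<otimes>\<^bsub>Q\<^esub> qcls (pivot_prod m ?SY) \<otimes>\<^bsub>Q\<^esub> qcls (Y m m)"
  proof -
    have "pivot_prod ?n T = pivot_prod ?n (blk_mult ?n V ?DY)"
      unfolding T_def using V D by (intro pivot_prod_row_transv_right reduces_to_id_unit reduces_to_id_blk_mult)
    then show ?thesis
      using qcls_pivot_prod_blk_diag_right[OF Suc.IH S(2) _ V] E S V
      by (simp add: reduces_to_id_schur)
  qed
  also have "qcls (pivot_prod ?n V) = \<one>\<^bsub>Q\<^esub>"
    unfolding V_def using reduces_to_id_pivot_col[OF Y] by (rule qcls_pivot_prod_row_col_transv)
  finally show ?case
    using qcls_pivot_prod_Suc[OF X] qcls_pivot_prod_Suc[OF Y] E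
      qcls_carrier[OF reduces_to_id_pivot_prod[OF S(1)]] qcls_carrier[OF reduces_to_id_pivot_prod[OF S(2)]]
      qcls_carrier[OF reduces_to_id_pivot_prod[OF V]]
    by (simp add: qcls_carrier QG.m_ac)
qed

definition GL_ker :: "'b mat set" where
  "GL_ker = {N \<in> carrier GL_group. map_mat eps N = idm}"

lemma GL_ker_entry: "N \<in> GL_ker \<Longrightarrow> eps (N i k) = idm i k"
  unfolding GL_ker_def map_mat_def by (auto dest: fun_cong)

lemma GL_ker_reduces_to_id: "N \<in> GL_ker \<Longrightarrow> reduces_to_id n N"
  unfolding reduces_to_id_def using GL_ker_entry by blast

lemma GL_ker_GL: "N \<in> GL_ker \<Longrightarrow> N \<in> carrier GL_group" by (simp add: GL_ker_def)

lemma GL_ker_I: "in_block n N \<Longrightarrow> (\<And>i k. eps (N i k) = idm i k) \<Longrightarrow> N \<in> GL_ker"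
  unfolding GL_ker_def using GL_if_eps_idm by (auto simp: map_mat_def fun_eq_iff)

lemma GL_ker_mult: assumes "A \<in> GL_ker" "B \<in> GL_ker" shows "mmul A B \<in> GL_ker"
proof -
  have "map_mat eps (mmul A B) = mmul (map_mat eps A) (map_mat eps B)"
    using assms by (intro map_mat_mmul_fin[OF eps_ring_hom_cls]) (auto simp: GL_ker_def GL_fin_mat)
  then show ?thesis using assms by (simp add: GL_ker_def GL_mmul_closed mmul_idm_left)
qed

lemma GL_ker_conj_GL: assumes Z: "Z \<in> carrier GL_group" and N: "N \<in> GL_ker" shows "conj_GL Z N \<in> GL_ker"
proof -
  interpret h: group_hom GL_group GL_group "map_mat eps" by (rule map_mat_group_hom[OF eps_ring_hom_cls])
  have NG: "N \<in> carrier GL_group" using N by (simp add: GL_ker_def)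
  have "map_mat eps (conj_GL Z N) = mmul (map_mat eps Z) (mmul (map_mat eps N) (map_mat eps (GL_inv Z)))"
    unfolding conj_GL_def using h.hom_mult[of Z "mmul N (GL_inv Z)"] h.hom_mult[of N "GL_inv Z"] Z NG GL_inv_closed[OF Z]
      GL_mmul_closed[OF NG GL_inv_closed[OF Z]] by (simp add: GL_mult)
  also have "\<dots> = mmul (map_mat eps Z) (GL_inv (map_mat eps Z))"
    using N h.hom_inv[OF Z] by (simp add: GL_ker_def mmul_idm_left GL_inv_def)
  also have "\<dots> = idm" by (rule GL_inv_r[OF map_mat_GL[OF eps_ring_hom_cls Z]])
  finally show ?thesis using conj_GL_GL[OF Z NG] by (simp add: GL_ker_def)
qed

definition blk_size :: "'b mat \<Rightarrow> nat" where "blk_size N = (LEAST n. in_block n N)"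

definition pdet :: "'b mat \<Rightarrow> 'b set" where "pdet N = qcls (pivot_prod (blk_size N) N)"

lemma pdet_eq: assumes "in_block n N" shows "pdet N = qcls (pivot_prod n N)"
proof -
  have b: "in_block (blk_size N) N" unfolding blk_size_def using assms by (rule LeastI)
  have le: "blk_size N \<le> n" unfolding blk_size_def using assms by (rule Least_le)
  show ?thesis unfolding pdet_def using pivot_prod_in_block[OF b le] by simp
qed

lemma pdet_carrier: assumes "N \<in> GL_ker" shows "pdet N \<in> carrier Q"
proof -
  obtain n where "in_block n N" using GL_in_block[OF GL_ker_GL[OF assms]] by blast
  then show ?thesis
    using qcls_carrier[OF reduces_to_id_pivot_prod[OF GL_ker_reduces_to_id[OF assms]]] by (simp add: pdet_eq)
qed

lemma pdet_mult:
  assumes A: "A \<in> GL_ker" and B: "B \<in> GL_ker"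
  shows "pdet (mmul A B) = pdet A \<otimes>\<^bsub>Q\<^esub> pdet B"
proof -
  obtain n where b: "in_block n A" "in_block n B"
    using GL_fin_mat GL_ker_GL A B by (metis common_block)
  have "pdet (mmul A B) = qcls (pivot_prod n (mmul A B))" by (rule pdet_eq[OF in_block_mmul[OF b]])
  also have "pivot_prod n (mmul A B) = pivot_prod n (blk_mult n A B)"
    by (rule pivot_prod_cong) (simp add: mmul_eq_blk_mult[OF b(1)])
  also have "qcls (pivot_prod n (blk_mult n A B)) = qcls (pivot_prod n A) \<otimes>\<^bsub>Q\<^esub> qcls (pivot_prod n B)"
    using A B by (intro pivot_prod_mult GL_ker_reduces_to_id)
  finally show ?thesis using pdet_eq b by simp
qed

lemma pdet_idm: "pdet idm = \<one>\<^bsub>Q\<^esub>"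
  using pdet_eq[OF in_block_idm[of 0]] qcls_one by simp

definition eps_transv :: "'b mat \<Rightarrow> bool" where
  "eps_transv M \<longleftrightarrow> (\<exists>n a b. vec_in_block n a \<and> vec_in_block n b \<and>
     ((\<forall>k. eps (a k) = 0) \<or> (\<forall>k. eps (b k) = 0)) \<and> M = transv a b)"

lemma eps_transv_GL_ker:
  assumes "eps_transv M"
  shows "M \<in> GL_ker"
proof -
  obtain n a b where v: "vec_in_block n a" "vec_in_block n b"
    and h: "(\<forall>k. eps (a k) = 0) \<or> (\<forall>k. eps (b k) = 0)" and M: "M = transv a b"
    using assms unfolding eps_transv_def by blast
  show ?thesis unfolding M using h by (intro GL_ker_I[OF in_block_transv[OF v]]) (auto simp: transv_def)
qed

lemma pdet_conj_transv:
  assumes Z: "Z \<in> carrier GL_group" and v: "vec_in_block n a" "vec_in_block n b"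
    and h: "(\<forall>k. eps (a k) = 0) \<or> (\<forall>k. eps (b k) = 0)"
  shows "pdet (conj_GL Z (transv a b)) = qcls (1 + dot n b a)"
proof -
  obtain n0 where n0: "in_block n0 Z" "in_block n0 (GL_inv Z)" using GL_in_block_inv[OF Z] by blast
  let ?n = "max n n0"
  let ?a = "mat_vec ?n Z a" and ?b = "vec_mat ?n b (GL_inv Z)"
  have bz: "in_block ?n Z" "in_block ?n (GL_inv Z)" using n0 by (auto intro: in_block_mono)
  have v': "vec_in_block ?n a" "vec_in_block ?n b" using v by (auto intro: vec_in_block_mono)
  have c: "conj_GL Z (transv a b) = transv ?a ?b"
    unfolding conj_GL_def using GL_inv_r[OF Z] by (rule conj_transv[OF bz _ v'])
  have bR: "in_block ?n (transv ?a ?b)" by (intro in_block_transv vec_in_block_mat_vec vec_in_block_vec_mat bz)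
  have "pdet (conj_GL Z (transv a b)) = qcls (pivot_prod ?n (\<lambda>i k. idm i k + ?a i * 1 * ?b k))"
    unfolding c pdet_eq[OF bR] by (simp add: transv_def)
  also have "\<dots> = qcls (1 + 1 * (\<Sum>k<?n. ?b k * ?a k))"
    using h by (intro pivot_prod_rank_one) (auto simp: mat_vec_def vec_mat_def)
  also have "(\<Sum>k<?n. ?b k * ?a k) = dot n b a"
    using dot_conj[OF bz(1,2) GL_inv_l[OF Z] v'] sum_vec_in_block_right[OF v(1), of ?n b]
    by (simp add: dot_def)
  finally show ?thesis by simp
qed

lemma pdet_conj_eps_transv:
  assumes "Z \<in> carrier GL_group" "eps_transv M"
  shows "pdet (conj_GL Z M) = pdet M"
proof -
  obtain n a b where v: "vec_in_block n a" "vec_in_block n b"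
    and h: "(\<forall>k. eps (a k) = 0) \<or> (\<forall>k. eps (b k) = 0)" and M: "M = transv a b"
    using assms(2) unfolding eps_transv_def by blast
  have "conj_GL idm M = M" using eps_transv_GL_ker[OF assms(2)] by (simp add: GL_ker_GL conj_GL_idm)
  then show ?thesis
    using pdet_conj_transv[OF assms(1) v h] pdet_conj_transv[OF idm_GL v h] by (simp add: M)
qed

lemma blk_restrict_schur_GL_ker: "N \<in> GL_ker \<Longrightarrow> blk_restrict t (schur t N) \<in> GL_ker"
  using reduces_to_id_schur[OF GL_ker_reduces_to_id]
  by (intro GL_ker_I[OF in_block_blk_restrict]) (auto simp: blk_restrict_def reduces_to_id_def)

lemma GL_ker_pivot_factorization:
  assumes N: "N \<in> GL_ker" and b: "in_block (Suc t) N"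
  obtains U E D L where "N = mmul U (mmul (mmul E D) L)"
    and "eps_transv U" "eps_transv D" "eps_transv L" "E \<in> GL_ker" "in_block t E"
proof
  have P: "reduces_to_id (Suc t) N" by (rule GL_ker_reduces_to_id[OF N])
  show "N = mmul (col_transv t (pivot_col t N))
      (mmul (mmul (blk_restrict t (schur t N)) (diag_mat t (N t t))) (row_transv t (pivot_row t N)))"
    using pivot_factorization[OF b reduces_to_id_unit[OF P]] by (simp add: blk_diag_eq_mult)
  have v: "vec_in_block (Suc t) (vtrunc t g)" "vec_in_block (Suc t) (unit_vec t)" for g :: "'b vec"
    by (auto intro: vec_in_block_vtrunc vec_in_block_unit_vec)
  have vD: "vec_in_block (Suc t) (\<lambda>k. if k = t then N t t - 1 else 0)" by (simp add: vec_in_block_def)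
  show "eps_transv (col_transv t (pivot_col t N))"
    unfolding eps_transv_def col_transv_def using v reduces_to_id_pivot_col[OF P]
    by (intro exI[of _ "Suc t"] exI[of _ "vtrunc t (pivot_col t N)"] exI[of _ "unit_vec t"])
       (auto simp: vtrunc_def)
  show "eps_transv (row_transv t (pivot_row t N))"
    unfolding eps_transv_def row_transv_def using v reduces_to_id_pivot_row[OF P]
    by (intro exI[of _ "Suc t"] exI[of _ "unit_vec t"] exI[of _ "vtrunc t (pivot_row t N)"])
       (auto simp: vtrunc_def)
  show "eps_transv (diag_mat t (N t t))"
    unfolding eps_transv_def diag_mat_transv using v(2) vD reduces_to_id_E1[OF P]
    by (intro exI[of _ "Suc t"] exI[of _ "unit_vec t"] exI[of _ "\<lambda>k. if k = t then N t t - 1 else 0"])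
       auto
  show "blk_restrict t (schur t N) \<in> GL_ker" by (rule blk_restrict_schur_GL_ker[OF N])
qed (rule in_block_blk_restrict)

lemma in_block_0_idm: "in_block 0 N \<Longrightarrow> N = idm"
  by (rule in_block_eqI[OF _ in_block_idm]) auto

lemma pdet_conj_in_block:
  assumes Z: "Z \<in> carrier GL_group"
  shows "N \<in> GL_ker \<Longrightarrow> in_block t N \<Longrightarrow> pdet (conj_GL Z N) = pdet N"
proof (induction t arbitrary: N)
  case 0
  then have "N = idm" by (simp add: in_block_0_idm)
  then show ?case using Z by (simp add: conj_GL_def mmul_idm_left GL_inv_r)
next
  case (Suc t)
  obtain U E D L where N: "N = mmul U (mmul (mmul E D) L)"
    and T: "eps_transv U" "eps_transv D" "eps_transv L" and E: "E \<in> GL_ker" "in_block t E"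
    using GL_ker_pivot_factorization[OF Suc.prems] .
  note K = eps_transv_GL_ker[OF T(1)] E(1) eps_transv_GL_ker[OF T(2)] eps_transv_GL_ker[OF T(3)]
  note KZ = GL_ker_conj_GL[OF Z K(1)] GL_ker_conj_GL[OF Z K(2)] GL_ker_conj_GL[OF Z K(3)]
    GL_ker_conj_GL[OF Z K(4)]
  have "conj_GL Z N = mmul (conj_GL Z U) (mmul (mmul (conj_GL Z E) (conj_GL Z D)) (conj_GL Z L))"
    using K Z by (simp add: N conj_GL_mult GL_mmul_closed GL_ker_GL)
  then have "pdet (conj_GL Z N)
      = pdet (conj_GL Z U) \<otimes>\<^bsub>Q\<^esub> ((pdet (conj_GL Z E) \<otimes>\<^bsub>Q\<^esub> pdet (conj_GL Z D)) \<otimes>\<^bsub>Q\<^esub> pdet (conj_GL Z L))"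
    using KZ by (simp add: pdet_mult GL_ker_mult)
  also have "\<dots> = pdet U \<otimes>\<^bsub>Q\<^esub> ((pdet E \<otimes>\<^bsub>Q\<^esub> pdet D) \<otimes>\<^bsub>Q\<^esub> pdet L)"
    using Suc.IH[OF E] pdet_conj_eps_transv[OF Z] T by simp
  also have "\<dots> = pdet N"
    using K by (simp add: N pdet_mult GL_ker_mult)
  finally show ?case .
qed

lemma pdet_conj: assumes "Z \<in> carrier GL_group" "N \<in> GL_ker" shows "pdet (conj_GL Z N) = pdet N"
  using GL_in_block[OF GL_ker_GL[OF assms(2)]] pdet_conj_in_block[OF assms] by blast

lemma K1class_pivot_prod: "N \<in> GL_ker \<Longrightarrow> in_block t N \<Longrightarrow> K1class N = K1class (unit_mat (pivot_prod t N))"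
proof (induction t arbitrary: N)
  case 0
  then have "N = idm" by (simp add: in_block_0_idm)
  then show ?case by (simp add: unit_mat_diag_mat diag_mat_one)
next
  case (Suc t)
  have P: "reduces_to_id (Suc t) N" by (rule GL_ker_reduces_to_id[OF Suc.prems(1)])
  have S: "blk_restrict t (schur t N) \<in> GL_ker" by (rule blk_restrict_schur_GL_ker[OF Suc.prems(1)])
  have "K1class N = K1class (blk_restrict t (schur t N)) \<otimes>\<^bsub>K1\<^esub> K1class (unit_mat (N t t))"
    by (rule K1class_schur_step[OF Suc.prems(2) reduces_to_id_unit[OF P] GL_ker_GL[OF S]])
  also have "\<dots> = K1class (unit_mat (pivot_prod t (schur t N))) \<otimes>\<^bsub>K1\<^esub> K1class (unit_mat (N t t))"
    using Suc.IH[OF S in_block_blk_restrict] pivot_prod_cong[of t "blk_restrict t (schur t N)" "schur t N"]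
    by (simp add: blk_restrict_def)
  also have "\<dots> = K1class (unit_mat (pivot_prod (Suc t) N))"
    using K1class_unit_mult[OF E1_unit E1_unit, of "pivot_prod t (schur t N)" "N t t"]
      reduces_to_id_pivot_prod[OF reduces_to_id_schur[OF P]] reduces_to_id_E1[OF P]
    by simp
  finally show ?case .
qed

section \<open>The splitting of \<open>K\<^sub>1(B)\<close>\<close>

definition eps_lift :: "'b mat \<Rightarrow> 'b mat" where
  "eps_lift M = map_mat j (map_mat eps M)"

definition ker_part :: "'b mat \<Rightarrow> 'b mat" where
  "ker_part M = mmul M (GL_inv (eps_lift M))"

definition delta :: "'b mat \<Rightarrow> 'b set" where
  "delta M = pdet (ker_part M)"

lemma eps_lift_GL: "M \<in> carrier GL_group \<Longrightarrow> eps_lift M \<in> carrier GL_group"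
  unfolding eps_lift_def by (intro map_mat_GL[OF j_ring_hom_cls] map_mat_GL[OF eps_ring_hom_cls])

lemma eps_lift_mult:
  "M1 \<in> carrier GL_group \<Longrightarrow> M2 \<in> carrier GL_group \<Longrightarrow> eps_lift (mmul M1 M2) = mmul (eps_lift M1) (eps_lift M2)"
  unfolding eps_lift_def
  by (simp add: map_mat_mult_GL[OF eps_ring_hom_cls] map_mat_mult_GL[OF j_ring_hom_cls] map_mat_GL[OF eps_ring_hom_cls])

lemma eps_eps_lift: "map_mat eps (eps_lift M) = map_mat eps M"
  unfolding eps_lift_def map_mat_comp by (simp add: eps_j map_mat_def)

lemma ker_part_GL: "M \<in> carrier GL_group \<Longrightarrow> ker_part M \<in> carrier GL_group"
  unfolding ker_part_def by (intro GL_mmul_closed GL_inv_closed eps_lift_GL)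

lemma ker_part_GL_ker: assumes M: "M \<in> carrier GL_group" shows "ker_part M \<in> GL_ker"
proof -
  have "map_mat eps (ker_part M) = mmul (map_mat eps M) (map_mat eps (GL_inv (eps_lift M)))"
    unfolding ker_part_def by (rule map_mat_mult_GL[OF eps_ring_hom_cls M GL_inv_closed[OF eps_lift_GL[OF M]]])
  also have "\<dots> = mmul (map_mat eps M) (GL_inv (map_mat eps M))"
    by (simp add: map_mat_GL_inv[OF eps_ring_hom_cls eps_lift_GL[OF M]] eps_eps_lift)
  also have "\<dots> = idm" by (rule GL_inv_r[OF map_mat_GL[OF eps_ring_hom_cls M]])
  finally show ?thesis using ker_part_GL[OF M] by (simp add: GL_ker_def)
qed

lemma delta_carrier: "M \<in> carrier GL_group \<Longrightarrow> delta M \<in> carrier Q"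
  unfolding delta_def by (rule pdet_carrier[OF ker_part_GL_ker])

lemma ker_part_mult_eps_lift: "M \<in> carrier GL_group \<Longrightarrow> mmul (ker_part M) (eps_lift M) = M"
  unfolding ker_part_def by (simp add: eps_lift_GL GL_assoc GL_inv_closed GL_inv_l GL_idm_right)

lemma delta_mult: assumes M1: "M1 \<in> carrier GL_group" and M2: "M2 \<in> carrier GL_group"
  shows "delta (mmul M1 M2) = delta M1 \<otimes>\<^bsub>Q\<^esub> delta M2"
proof -
  have J: "eps_lift M1 \<in> carrier GL_group" "eps_lift M2 \<in> carrier GL_group" using eps_lift_GL M1 M2 by auto
  have Ji: "GL_inv (eps_lift M1) \<in> carrier GL_group" "GL_inv (eps_lift M2) \<in> carrier GL_group" using J GL_inv_closed by auto
  have M1i: "GL_inv M1 \<in> carrier GL_group" using GL_inv_closed M1 by auto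
  have "ker_part (mmul M1 M2) = mmul (mmul M1 M2) (mmul (GL_inv (eps_lift M2)) (GL_inv (eps_lift M1)))"
    unfolding ker_part_def by (simp add: eps_lift_mult M1 M2 GL_inv_mult J)
  also have "\<dots> = mmul M1 (mmul M2 (mmul (GL_inv (eps_lift M2)) (GL_inv (eps_lift M1))))"
    using M1 M2 Ji by (simp add: GL_assoc GL_mmul_closed)
  also have "\<dots> = mmul (conj_GL M1 (ker_part M2)) (ker_part M1)"
    unfolding conj_GL_def ker_part_def using M1 M2 Ji M1i
    by (simp add: GL_assoc GL_mmul_closed GL_inv_cancel)
  finally have e: "ker_part (mmul M1 M2) = mmul (conj_GL M1 (ker_part M2)) (ker_part M1)" .
  have "delta (mmul M1 M2) = pdet (conj_GL M1 (ker_part M2)) \<otimes>\<^bsub>Q\<^esub> pdet (ker_part M1)"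
    unfolding delta_def e by (rule pdet_mult[OF GL_ker_conj_GL[OF M1 ker_part_GL_ker[OF M2]] ker_part_GL_ker[OF M1]])
  also have "\<dots> = delta M2 \<otimes>\<^bsub>Q\<^esub> delta M1"
    unfolding delta_def by (simp add: pdet_conj[OF M1 ker_part_GL_ker[OF M2]])
  also have "\<dots> = delta M1 \<otimes>\<^bsub>Q\<^esub> delta M2"
    by (rule QG.m_comm[OF delta_carrier[OF M2] delta_carrier[OF M1]])
  finally show ?thesis .
qed

lemma delta_hom: "delta \<in> hom GL_group Q"
  by (rule homI) (simp_all add: delta_carrier delta_mult GL_mult)

lemma delta_derived_GL: assumes d: "d \<in> derived_GL" shows "delta d = \<one>\<^bsub>Q\<^esub>"
proof -
  interpret h: group_hom GL_group Q delta
    by (simp add: group_hom_def group_hom_axioms_def delta_hom GL_group_is_group Q_group)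
  have "delta ` derived_GL = derived Q (delta ` carrier GL_group)"
    by (rule h.derived_img[symmetric, OF subset_refl])
  also have "\<dots> \<subseteq> derived Q (carrier Q)"
    by (rule QG.mono_derived) (use delta_carrier in auto)
  also have "\<dots> = {\<one>\<^bsub>Q\<^esub>}" by (rule QG.derived_eq_singleton) simp
  finally show ?thesis using d by auto
qed

lemma delta_unit: assumes u: "u \<in> E1" shows "delta (unit_mat u) = qcls u"
proof -
  have uu: "ring_unit u" using u E1_unit by simp
  have "eps_lift (unit_mat u) = idm"
    unfolding eps_lift_def map_mat_unit_mat[OF eps_ring_hom_cls] map_mat_unit_mat[OF j_ring_hom_cls] using u
    by (simp add: ring_hom_cls_one[OF j_ring_hom_cls] unit_mat_diag_mat diag_mat_one)
  then have "ker_part (unit_mat u) = unit_mat u"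
    unfolding ker_part_def by (simp add: GL_inv_idm GL_idm_right unit_mat_GL[OF uu])
  moreover have "in_block 1 (unit_mat u)" unfolding unit_mat_diag_mat by (rule in_block_diag_mat) simp
  ultimately show ?thesis unfolding delta_def using pdet_eq by (simp add: unit_mat_def)
qed

lemma delta_j: assumes X: "X \<in> carrier GL_group" shows "delta (map_mat j X) = \<one>\<^bsub>Q\<^esub>"
proof -
  have "eps_lift (map_mat j X) = map_mat j X"
    unfolding eps_lift_def map_mat_comp by (simp add: eps_j map_mat_def)
  then have "ker_part (map_mat j X) = idm"
    unfolding ker_part_def by (simp add: GL_inv_r map_mat_GL[OF j_ring_hom_cls X])
  then show ?thesis unfolding delta_def by (simp add: pdet_idm)
qed

lemma unit_class_hom_E1: "unit_class \<in> hom E1_grp K1"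
  by (rule homI) (simp_all add: E1_grp_simps unit_class_def K1class_carrier unit_mat_GL E1_unit K1class_unit_mult)

lemma unit_class_C: assumes c: "c \<in> C" shows "unit_class c = \<one>\<^bsub>K1\<^esub>"
proof -
  interpret h: group_hom UG K1 unit_class
    by (simp add: group_hom_def group_hom_axioms_def unit_class_hom units_grp_group K1G.is_group)
  have "C_gens \<subseteq> kernel UG K1 unit_class"
  proof
    fix g assume "g \<in> C_gens"
    then obtain a b where ab: "g = (1 + a * b) * inv\<^bsub>UG\<^esub> (1 + b * a)" "eps (a * b) = 0" "eps (b * a) = 0"
      by (auto simp: C_gens_def)
    have uu: "ring_unit (1 + a * b)" "ring_unit (1 + b * a)" using ab by (simp_all add: E1_unit)
    have "unit_class g = unit_class (1 + a * b) \<otimes>\<^bsub>K1\<^esub> inv\<^bsub>K1\<^esub> unit_class (1 + b * a)"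
      using ab uu unfolding unit_class_def
      by (simp add: units_grp_inv K1class_unit_mult ring_unit_ring_inv K1class_unit_ring_inv)
    then have "unit_class g = \<one>\<^bsub>K1\<^esub>"
      using uu by (simp add: unit_class_def K1class_unit_swap K1class_carrier unit_mat_GL)
    moreover have "g \<in> carrier UG" using \<open>g \<in> C_gens\<close> C_gens_E1 by (intro subgroup.mem_carrier[OF E1_sub]) blast
    ultimately show "g \<in> kernel UG K1 unit_class" by (simp add: kernel_def)
  qed
  then have "C \<subseteq> kernel UG K1 unit_class"
    unfolding C_def by (rule UGg.generate_subgroup_incl[OF _ h.subgroup_kernel])
  then show ?thesis using c by (auto simp: kernel_def)
qed

lemma K1unit_qcls: assumes u: "u \<in> E1" shows "K1unit (qcls u) = unit_class u"
  unfolding K1unit_def qcls_def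
  using group.the_elem_hom_image_rcos[OF E1_grp_group C_sub _ unit_class_hom_E1 K1G.is_group unit_class_C] u
  by (simp add: E1_grp_simps unit_class_def[abs_def])

lemma K1unit_hom: "K1unit \<in> hom Q K1"
proof (rule homI)
  fix y assume "y \<in> carrier Q"
  then obtain u where "u \<in> E1" "y = qcls u" by (auto simp: Q_carrier)
  then show "K1unit y \<in> carrier K1" using K1unit_qcls hom_in_carrier[OF unit_class_hom_E1] by (simp add: E1_grp_simps)
next
  fix x y assume "x \<in> carrier Q" "y \<in> carrier Q"
  then obtain u v where uv: "u \<in> E1" "x = qcls u" "v \<in> E1" "y = qcls v" by (auto simp: Q_carrier)
  then show "K1unit (x \<otimes>\<^bsub>Q\<^esub> y) = K1unit x \<otimes>\<^bsub>K1\<^esub> K1unit y"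
    using hom_mult[OF unit_class_hom_E1] by (simp add: K1unit_qcls E1_grp_simps flip: qcls_mult)
qed

definition K1_split :: "'a mat set \<times> 'b set \<Rightarrow> 'b mat set" where
  "K1_split = (\<lambda>(x, y). K1map j x \<otimes>\<^bsub>K1\<^esub> K1unit y)"

lemma K1_split_hom: "K1_split \<in> hom (K1 \<times>\<times> Q) K1"
proof -
  have "(K1map j \<circ> fst) \<in> hom (K1 \<times>\<times> Q) K1" "(K1unit \<circ> snd) \<in> hom (K1 \<times>\<times> Q) K1"
    using K1map_hom[OF j_ring_hom_cls] K1unit_hom by (simp_all add: hom_of_fst hom_of_snd Q_group)
  then have "(\<lambda>p. (K1map j \<circ> fst) p \<otimes>\<^bsub>K1\<^esub> (K1unit \<circ> snd) p) \<in> hom (K1 \<times>\<times> Q) K1"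
    by (rule K1G.hom_group_mult)
  then show ?thesis by (simp add: K1_split_def case_prod_beta')
qed

lemma K1_split_class:
  assumes "X \<in> carrier GL_group" "u \<in> E1"
  shows "K1_split (K1class X, qcls u) = K1class (mmul (map_mat j X) (unit_mat u))"
  using assms
  by (simp add: K1_split_def K1map_class[OF j_ring_hom_cls] K1unit_qcls unit_class_def K1class_mult
      map_mat_GL[OF j_ring_hom_cls] unit_mat_GL E1_unit)

lemma K1_split_surj: "carrier K1 \<subseteq> K1_split ` carrier (K1 \<times>\<times> Q)"
proof
  fix z :: "'b mat set" assume "z \<in> carrier K1"
  then obtain M where M: "M \<in> carrier GL_group" and z: "z = K1class M" by (auto simp: K1_carrier)
  have N: "ker_part M \<in> GL_ker" by (rule ker_part_GL_ker[OF M])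
  obtain n where n: "in_block n (ker_part M)" using GL_in_block[OF GL_ker_GL[OF N]] by blast
  let ?u = "pivot_prod n (ker_part M)"
  have u: "?u \<in> E1" by (rule reduces_to_id_pivot_prod[OF GL_ker_reduces_to_id[OF N]])
  have eM: "map_mat eps M \<in> carrier GL_group" by (rule map_mat_GL[OF eps_ring_hom_cls M])
  have uG: "unit_mat ?u \<in> carrier GL_group" using u by (simp add: unit_mat_GL E1_unit)
  have "K1_split (K1class (map_mat eps M), qcls ?u) = K1class (eps_lift M) \<otimes>\<^bsub>K1\<^esub> K1class (ker_part M)"
    using K1_split_class[OF eM u] K1class_pivot_prod[OF N n] K1class_mult[OF eps_lift_GL[OF M] uG]
    by (simp add: eps_lift_def)
  also have "\<dots> = K1class (mmul (ker_part M) (eps_lift M))"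
    using K1G.m_comm[OF K1class_carrier[OF eps_lift_GL[OF M]] K1class_carrier[OF GL_ker_GL[OF N]]]
      K1class_mult[OF GL_ker_GL[OF N] eps_lift_GL[OF M]] by simp
  finally have "K1_split (K1class (map_mat eps M), qcls ?u) = z" by (simp add: ker_part_mult_eps_lift M z)
  moreover have "(K1class (map_mat eps M), qcls ?u) \<in> carrier (K1 \<times>\<times> Q)"
    using K1class_carrier[OF eM] qcls_carrier[OF u] by simp
  ultimately show "z \<in> K1_split ` carrier (K1 \<times>\<times> Q)" by force
qed

lemma K1_split_kernel:
  assumes p: "p \<in> carrier (K1 \<times>\<times> Q)" and triv: "K1_split p = \<one>\<^bsub>K1\<^esub>"
  shows "p = \<one>\<^bsub>K1 \<times>\<times> Q\<^esub>"
proof -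
  obtain X u where X: "X \<in> carrier GL_group" and u: "u \<in> E1" and p: "p = (K1class X, qcls u)"
    using p by (auto simp: K1_carrier Q_carrier)
  let ?M = "mmul (map_mat j X) (unit_mat u)"
  have jX: "map_mat j X \<in> carrier GL_group" by (rule map_mat_GL[OF j_ring_hom_cls X])
  have uG: "unit_mat u \<in> carrier GL_group" using u by (simp add: unit_mat_GL E1_unit)
  have "K1class ?M = \<one>\<^bsub>K1\<^esub>" using triv K1_split_class[OF X u] p by simp
  then have MD: "?M \<in> derived_GL" using K1class_one_iff[OF GL_mmul_closed[OF jX uG]] by simp
  have "map_mat eps ?M = mmul (map_mat eps (map_mat j X)) (map_mat eps (unit_mat u))"
    by (rule map_mat_mult_GL[OF eps_ring_hom_cls jX uG])
  also have "\<dots> = X"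
    using u X unfolding map_mat_comp map_mat_unit_mat[OF eps_ring_hom_cls]
    by (simp add: eps_j unit_mat_diag_mat diag_mat_one) (simp add: map_mat_def GL_idm_right)
  finally have "map_mat eps ?M = X" .
  then have "K1class X = \<one>\<^bsub>K1\<^esub>"
    using map_mat_derived_GL[OF eps_ring_hom_cls MD] K1class_derived_GL by simp
  moreover have "qcls u = \<one>\<^bsub>Q\<^esub>"
    using delta_derived_GL[OF MD] delta_mult[OF jX uG] delta_j[OF X] delta_unit[OF u] qcls_carrier[OF u]
    by simp
  ultimately show ?thesis using p by simp
qed

lemma K1_split_iso: "K1_split \<in> iso (K1 \<times>\<times> Q) K1"
proof -
  interpret group_hom "K1 \<times>\<times> Q" K1 K1_split
    by (simp add: group_hom_def group_hom_axioms_def K1_split_hom DirProd_group K1G.is_group Q_group)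
  show ?thesis using K1_split_surj K1_split_kernel by (auto simp: iso_iff)
qed

end

theorem mainTheorem2:
  fixes \<epsilon> :: "'b::ring_1 \<Rightarrow> 'a::ring_1" and j :: "'a \<Rightarrow> 'b"
  assumes "local_augmentation \<epsilon> j"
  defines "U \<equiv> (units_grp :: 'b monoid)"
  defines "E1 \<equiv> {u. \<epsilon> u = 1}"
  defines "C \<equiv> generate U {(1 + a * b) * inv\<^bsub>U\<^esub> (1 + b * a) | a b. \<epsilon> (a * b) = 0 \<and> \<epsilon> (b * a) = 0}"
  shows "C \<lhd> U\<lparr>carrier := E1\<rparr> \<and>
         (\<lambda>(x, y). K1map j x \<otimes>\<^bsub>K1\<^esub> K1unit y)
           \<in> iso ((K1 :: (nat \<Rightarrow> nat \<Rightarrow> 'a) set monoid) \<times>\<times> (U\<lparr>carrier := E1\<rparr> Mod C))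
                 (K1 :: (nat \<Rightarrow> nat \<Rightarrow> 'b) set monoid)"
proof -
  interpret A: local_aug \<epsilon> j by (rule local_aug.intro) (rule assms(1))
  have "U\<lparr>carrier := E1\<rparr> = A.E1_grp" by (simp add: U_def A.E1_grp_def A.E1_def E1_def)
  moreover have "C = A.C" by (simp add: C_def A.C_def A.C_gens_def U_def)
  ultimately show ?thesis using A.C_normal A.K1_split_iso by (simp add: A.Q_def A.K1_split_def)
qed

end
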